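(* Let $K$ be a field, $Q$ the bipartite type $A$ quiver with vertices $y_0,x_1,\dots,x_n,y_n$ and arrows $\alpha_i\colon x_i\to y_{i-1}$, $\beta_i\colon x_i\to y_i$, $\mathbf{d}$ a dimension vector and $\mathbf{r}$ a quiver rank array with Zelevinsky permutation $v(\mathbf{r})$ and block rank matrix $\mathbf{b}=\mathbf{b}(\mathbf{r})$. Then: (1) $v(\mathbf{r})$ is the minimal length element of its $(W_P,W_P)$-double coset; (2) every box of Fulton's essential set $\mathcal{E}ss(v(\mathbf{r}))$ lies in the southeast corner of a block; (3) the length of $v(\mathbf{r})$ is $$\sum_{i=2}^{2n+1}\sum_{j=1}^{2n}\big(\mathbf{b}_{i-1,2n+1}-\mathbf{b}_{i-1,j}\big)\big(\mathbf{b}_{i,j}+\mathbf{b}_{i-1,j-1}-\mathbf{b}_{i,j-1}-\mathbf{b}_{i-1,j}\big).$$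
   Context: Setup: $\mathrm{rep}_Q(\mathbf{d})$ is the space of tuples $V=(V_a)$, $V_a\in\mathrm{Mat}_{\mathbf{d}(ha)\times\mathbf{d}(ta)}(K)$. $M_Q(V)$: block matrix with block rows $y_0,\dots,y_n$ and block columns $x_n,\dots,x_1$, $V_{\alpha_i}$ in block $(y_{i-1},x_i)$, $V_{\beta_i}$ in block $(y_i,x_i)$, zeros elsewhere; for an interval $J$ (nonempty set of consecutive vertices), $M_J(V)$ is the submatrix on block rows of the $y$-vertices and block columns of the $x$-vertices of $J$. A quiver rank array $\mathbf{r}$ is $J\mapsto\operatorname{rank}M_J(V)$ for some $V$; $\mathcal{O}_\mathbf{r}$ is the set of such $V$. $d_x=\sum\mathbf{d}(x_i)$, $d_y=\sum\mathbf{d}(y_i)$, $d=d_x+d_y$, $\zeta(V)=\begin{pmatrix}M_Q(V)&\mathbf{1}_{d_y}\\ \mathbf{1}_{d_x}&0\end{pmatrix}$. $d\times d$ matrices have row blocks of sizes $\mathbf{d}(y_0),\dots,\mathbf{d}(y_n),\mathbf{d}(x_n),\dots,\mathbf{d}(x_1)$ and column blocks of sizes $\mathbf{d}(x_n),\dots,\mathbf{d}(x_1),\mathbf{d}(y_0),\dots,\mathbf{d}(y_n)$, numbered $1..2n+1$; $Z_{i\times j}$ = block rows $1..i$, block columns $1..j$; $\mathbf{b}_{i,j}=\operatorname{rank}\zeta(V)_{i\times j}$ for $V\in\mathcal{O}_\mathbf{r}$, and $\mathbf{b}_{i,j}=0$ if $i$ or $j\notin[1,2n+1]$. $v(\mathbf{r})$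 is the unique $d\times d$ permutation matrix with exactly $\mathbf{b}_{i,j}+\mathbf{b}_{i-1,j-1}-\mathbf{b}_{i,j-1}-\mathbf{b}_{i-1,j}$ ones in block $(i,j)$ and whose ones run from northwest to southeast within each block row and each block column. A permutation $u\in S_d$ corresponds to the matrix with $1$ at $(i,u(i))$; its length is the number of inversions, equivalently the number of pairs of $1$s one of which lies strictly northeast of the other. The diagram of $u$ is the set of positions of the $d\times d$ grid with no $1$ directly north (same column, above) and no $1$ directly west (same row, left); $\mathcal{E}ss(u)$ is the set of positions $(i,j)$ in the diagram such that neither $(i+1,j)$ nor $(i,j+1)$ is in the diagram. The $(W_P,W_P)$-double coset of a permutation matrix $u$ is the set of permutation matrices obtained from $u$ by permuting rows within each block row and columns within each block column. *)

theory Defs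
  imports "Jordan_Normal_Form.DL_Rank" "HOL-Combinatorics.Permutations"
begin

definition mrank :: "'a::field mat \<Rightarrow> nat" where
  "mrank A = vec_space.rank (dim_row A) A"

(* block bookkeeping: a list of block sizes; blocks are 0-indexed here *)
definition offs :: "nat list \<Rightarrow> nat \<Rightarrow> nat" where
  "offs sz k = sum_list (take k sz)"

definition blk :: "nat list \<Rightarrow> nat \<Rightarrow> nat" where
  "blk sz p = (LEAST k. p < offs sz (Suc k))"

definition blockset :: "nat list \<Rightarrow> nat \<Rightarrow> nat set" where
  "blockset sz k = {offs sz k ..< offs sz (Suc k)}"

(* block matrix: block rows labelled by R (block of label i has rs i rows),
   block columns labelled by C (block of label k has cs k columns),
   block (i,k) filled with B i k *)
definition blkmat :: "nat list \<Rightarrow> nat list \<Rightarrow> (nat \<Rightarrow> nat) \<Rightarrow> (nat \<Rightarrow> nat)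
    \<Rightarrow> (nat \<Rightarrow> nat \<Rightarrow> 'a::zero mat) \<Rightarrow> 'a mat" where
  "blkmat R C rs cs B =
    (let rsz = map rs R; csz = map cs C in
     mat (sum_list rsz) (sum_list csz)
       (\<lambda>(p,q). let i = blk rsz p; j = blk csz q in
                 B (R ! i) (C ! j) $$ (p - offs rsz i, q - offs csz j)))"

(* Quiver y_0 <- x_1 -> y_1 <- x_2 -> ... <- x_n -> y_n.
   dy i = d(y_i) (0 \<le> i \<le> n), dx k = d(x_k) (1 \<le> k \<le> n).
   Va k = V_{alpha_k} : x_k -> y_{k-1},  Vb k = V_{beta_k} : x_k -> y_k. *)
definition is_rep :: "nat \<Rightarrow> (nat \<Rightarrow> nat) \<Rightarrow> (nat \<Rightarrow> nat)
    \<Rightarrow> (nat \<Rightarrow> 'a::field mat) \<Rightarrow> (nat \<Rightarrow> 'a mat) \<Rightarrow> bool" where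
  "is_rep n dy dx Va Vb \<longleftrightarrow>
     (\<forall>k\<in>{1..n}. Va k \<in> carrier_mat (dy (k - 1)) (dx k) \<and> Vb k \<in> carrier_mat (dy k) (dx k))"

(* the block in block row y_i, block column x_k of M_Q(V) *)
definition qblock :: "(nat \<Rightarrow> nat) \<Rightarrow> (nat \<Rightarrow> nat) \<Rightarrow> (nat \<Rightarrow> 'a::zero mat) \<Rightarrow> (nat \<Rightarrow> 'a mat)
    \<Rightarrow> nat \<Rightarrow> nat \<Rightarrow> 'a mat" where
  "qblock dy dx Va Vb i k =
     (if i + 1 = k then Va k else if i = k then Vb k else 0\<^sub>m (dy i) (dx k))"

(* vertices in linear order y_0, x_1, y_1, ..., x_n, y_n at positions 0..2n:
   y_i at position 2i, x_k at position 2k-1. An interval J = {a..b}, a \<le> b \<le> 2n.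
   M_J(V): block rows y_i (i increasing) in J, block columns x_k (k decreasing) in J. *)
definition MJ :: "nat \<Rightarrow> (nat \<Rightarrow> nat) \<Rightarrow> (nat \<Rightarrow> nat) \<Rightarrow> (nat \<Rightarrow> 'a::zero mat) \<Rightarrow> (nat \<Rightarrow> 'a mat)
    \<Rightarrow> nat \<Rightarrow> nat \<Rightarrow> 'a mat" where
  "MJ n dy dx Va Vb a b =
     blkmat (filter (\<lambda>i. a \<le> 2*i \<and> 2*i \<le> b) [0..<n+1])
            (filter (\<lambda>k. a \<le> 2*k - 1 \<and> 2*k - 1 \<le> b) (rev [1..<n+1]))
            dy dx (qblock dy dx Va Vb)"

definition MQ :: "nat \<Rightarrow> (nat \<Rightarrow> nat) \<Rightarrow> (nat \<Rightarrow> nat) \<Rightarrow> (nat \<Rightarrow> 'a::zero mat) \<Rightarrow> (nat \<Rightarrow> 'a mat)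
    \<Rightarrow> 'a mat" where
  "MQ n dy dx Va Vb = blkmat [0..<n+1] (rev [1..<n+1]) dy dx (qblock dy dx Va Vb)"

definition orbit :: "nat \<Rightarrow> (nat \<Rightarrow> nat) \<Rightarrow> (nat \<Rightarrow> nat) \<Rightarrow> (nat \<Rightarrow> nat \<Rightarrow> nat)
    \<Rightarrow> ((nat \<Rightarrow> 'a::field mat) \<times> (nat \<Rightarrow> 'a mat)) set" where
  "orbit n dy dx r = {(Va, Vb). is_rep n dy dx Va Vb \<and>
      (\<forall>a b. a \<le> b \<and> b \<le> 2*n \<longrightarrow> r a b = mrank (MJ n dy dx Va Vb a b))}"

definition qrank_array :: "'a::field itself \<Rightarrow> nat \<Rightarrow> (nat \<Rightarrow> nat) \<Rightarrow> (nat \<Rightarrow> nat)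
    \<Rightarrow> (nat \<Rightarrow> nat \<Rightarrow> nat) \<Rightarrow> bool" where
  "qrank_array _ n dy dx r \<longleftrightarrow> (orbit n dy dx r :: ((nat \<Rightarrow> 'a mat) \<times> (nat \<Rightarrow> 'a mat)) set) \<noteq> {}"

definition dY :: "nat \<Rightarrow> (nat \<Rightarrow> nat) \<Rightarrow> nat" where "dY n dy = (\<Sum>i\<le>n. dy i)"
definition dX :: "nat \<Rightarrow> (nat \<Rightarrow> nat) \<Rightarrow> nat" where "dX n dx = (\<Sum>k\<in>{1..n}. dx k)"

definition zeta :: "nat \<Rightarrow> (nat \<Rightarrow> nat) \<Rightarrow> (nat \<Rightarrow> nat) \<Rightarrow> (nat \<Rightarrow> 'a::field mat) \<Rightarrow> (nat \<Rightarrow> 'a mat)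
    \<Rightarrow> 'a mat" where
  "zeta n dy dx Va Vb =
     four_block_mat (MQ n dy dx Va Vb) (1\<^sub>m (dY n dy)) (1\<^sub>m (dX n dx)) (0\<^sub>m (dX n dx) (dY n dy))"

definition rowsz :: "nat \<Rightarrow> (nat \<Rightarrow> nat) \<Rightarrow> (nat \<Rightarrow> nat) \<Rightarrow> nat list" where
  "rowsz n dy dx = map dy [0..<n+1] @ map dx (rev [1..<n+1])"
definition colsz :: "nat \<Rightarrow> (nat \<Rightarrow> nat) \<Rightarrow> (nat \<Rightarrow> nat) \<Rightarrow> nat list" where
  "colsz n dy dx = map dx (rev [1..<n+1]) @ map dy [0..<n+1]"

definition topleft :: "nat \<Rightarrow> (nat \<Rightarrow> nat) \<Rightarrow> (nat \<Rightarrow> nat) \<Rightarrow> 'a mat \<Rightarrow> nat \<Rightarrow> nat \<Rightarrow> 'a mat" where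
  "topleft n dy dx Z i j = mat (offs (rowsz n dy dx) i) (offs (colsz n dy dx) j) (\<lambda>(p,q). Z $$ (p,q))"

(* block rank matrix b(r), blocks numbered 1..2n+1, zero outside *)
definition bmat :: "'a::field itself \<Rightarrow> nat \<Rightarrow> (nat \<Rightarrow> nat) \<Rightarrow> (nat \<Rightarrow> nat)
    \<Rightarrow> (nat \<Rightarrow> nat \<Rightarrow> nat) \<Rightarrow> nat \<Rightarrow> nat \<Rightarrow> nat" where
  "bmat _ n dy dx r i j =
     (if 1 \<le> i \<and> i \<le> 2*n+1 \<and> 1 \<le> j \<and> j \<le> 2*n+1 then
        (let V = (SOME V. V \<in> (orbit n dy dx r :: ((nat \<Rightarrow> 'a mat) \<times> (nat \<Rightarrow> 'a mat)) set))
         in mrank (topleft n dy dx (zeta n dy dx (fst V) (snd V)) i j))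
      else 0)"

definition bcount :: "(nat \<Rightarrow> nat \<Rightarrow> nat) \<Rightarrow> nat \<Rightarrow> nat \<Rightarrow> int" where
  "bcount b i j = int (b i j) + int (b (i-1) (j-1)) - int (b i (j-1)) - int (b (i-1) j)"

(* permutation u of {0..<d}: its matrix has a 1 at (p, u p) *)
definition zel_cond :: "nat list \<Rightarrow> nat list \<Rightarrow> (nat \<Rightarrow> nat \<Rightarrow> nat) \<Rightarrow> (nat \<Rightarrow> nat) \<Rightarrow> bool" where
  "zel_cond rs cs b u \<longleftrightarrow>
     u permutes {..<sum_list rs} \<and>
     (\<forall>I\<in>{1..length rs}. \<forall>J\<in>{1..length cs}.
        int (card {p \<in> blockset rs (I-1). u p \<in> blockset cs (J-1)}) = bcount b I J) \<and>
     (\<forall>I<length rs. \<forall>p\<in>blockset rs I. \<forall>p'\<in>blockset rs I. p < p' \<longrightarrow> u p < u p') \<and>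
     (\<forall>J<length cs. \<forall>p<sum_list rs. \<forall>p'<sum_list rs.
        u p \<in> blockset cs J \<and> u p' \<in> blockset cs J \<and> u p < u p' \<longrightarrow> p < p')"

definition zel :: "'a::field itself \<Rightarrow> nat \<Rightarrow> (nat \<Rightarrow> nat) \<Rightarrow> (nat \<Rightarrow> nat)
    \<Rightarrow> (nat \<Rightarrow> nat \<Rightarrow> nat) \<Rightarrow> nat \<Rightarrow> nat" where
  "zel K n dy dx r = (THE u. zel_cond (rowsz n dy dx) (colsz n dy dx) (bmat K n dy dx r) u)"

definition perm_length :: "nat \<Rightarrow> (nat \<Rightarrow> nat) \<Rightarrow> nat" where
  "perm_length d u = card {(i, j). i < j \<and> j < d \<and> u j < u i}"

(* (W_P,W_P)-double coset: permute rows within block rows, columns within block columns *)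
definition block_preserving :: "nat list \<Rightarrow> (nat \<Rightarrow> nat) \<Rightarrow> bool" where
  "block_preserving sz s \<longleftrightarrow> s permutes {..<sum_list sz} \<and>
     (\<forall>k<length sz. \<forall>p\<in>blockset sz k. s p \<in> blockset sz k)"

definition dcoset :: "nat list \<Rightarrow> nat list \<Rightarrow> (nat \<Rightarrow> nat) \<Rightarrow> (nat \<Rightarrow> nat) set" where
  "dcoset rs cs u = {t \<circ> u \<circ> s | s t. block_preserving rs s \<and> block_preserving cs t}"

definition diagram :: "nat \<Rightarrow> (nat \<Rightarrow> nat) \<Rightarrow> (nat \<times> nat) set" where
  "diagram d u = {(i, j). i < d \<and> j < d \<and> j < u i \<and> (\<forall>i'\<le>i. u i' \<noteq> j)}"

definition ess :: "nat \<Rightarrow> (nat \<Rightarrow> nat) \<Rightarrow> (nat \<times> nat) set" where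
  "ess d u = {(i, j) \<in> diagram d u. (i+1, j) \<notin> diagram d u \<and> (i, j+1) \<notin> diagram d u}"

definition se_corner :: "nat list \<Rightarrow> nat list \<Rightarrow> nat \<times> nat \<Rightarrow> bool" where
  "se_corner rs cs ij \<longleftrightarrow>
     (\<exists>k<length rs. fst ij \<in> blockset rs k \<and> fst ij + 1 = offs rs (Suc k)) \<and>
     (\<exists>l<length cs. snd ij \<in> blockset cs l \<and> snd ij + 1 = offs cs (Suc l))"

end

theory Submission
  imports Defs
begin

text \<open>Write \<open>b\<close> for the block rank matrix of \<open>\<zeta>(V)\<close>. Submodularity of the ranks of leading
  submatrices makes all mixed differences of \<open>b\<close> nonnegative, and the identity blocks of \<open>\<zeta>(V)\<close>
  fix its margins. For such data there is exactly one permutation with the prescribed number of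
  ones in every block whose ones run northwest to southeast along block rows and block columns:
  it sends the rows, sorted by the block column their one must lie in and then by position, to
  consecutive columns. In this permutation two ones in the same block row or block column never
  form an inversion. Permuting rows and columns within blocks keeps the block counts and the
  number of inversions between different blocks, so any other element of the double coset has
  strictly more inversions. An essential box off a block corner would have a neighbour in the
  diagram by the same monotonicity. Finally the ones northeast of the one in a given row are
  exactly those in earlier block rows and later block columns, which counts the length in terms
  of \<open>b\<close>.\<close>

section \<open>Ranks of leading submatrices\<close>

definition leading_submat :: "'a mat \<Rightarrow> nat \<Rightarrow> nat \<Rightarrow> 'a mat" where
  "leading_submat Z m k = mat m k (\<lambda>(p,q). Z $$ (p,q))"

definition leading_rank :: "'a::field mat \<Rightarrow> nat \<Rightarrow> nat \<Rightarrow> nat" where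
  "leading_rank Z m k = mrank (leading_submat Z m k)"

definition cols_indep :: "'a::field mat \<Rightarrow> nat \<Rightarrow> nat set \<Rightarrow> bool" where
  "cols_indep Z m T \<longleftrightarrow> (\<forall>c. (\<forall>i<m. (\<Sum>t\<in>T. c t * Z $$ (i,t)) = 0) \<longrightarrow> (\<forall>t\<in>T. c t = 0))"

context vec_space begin

lemma cols_indep_inj_on_col:
  fixes A :: "'a mat"
  assumes A: "A \<in> carrier_mat n k" and T: "T \<subseteq> {..<k}" and ind: "cols_indep A n T"
  shows "inj_on (col A) T"
proof (rule inj_onI, rule ccontr)
  fix t1 t2 assume t: "t1 \<in> T" "t2 \<in> T" and eq: "col A t1 = col A t2" and ne: "t1 \<noteq> t2"
  have finT: "finite T" using T finite_subset by blast
  define c where "c = (\<lambda>t. if t = t1 then (1::'a) else if t = t2 then -1 else 0)"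
  have "(\<Sum>t\<in>T. c t * A $$ (i,t)) = 0" if i: "i < n" for i
  proof -
    have "A $$ (i,t1) = A $$ (i,t2)"
      using arg_cong[OF eq, of "\<lambda>v. v $ i"] i t T A by (auto simp: subset_iff)
    moreover have "(\<Sum>t\<in>T. c t * A $$ (i,t)) =
        (\<Sum>t\<in>T. (if t = t1 then A $$ (i,t) else 0) - (if t = t2 then A $$ (i,t) else 0))"
      by (rule sum.cong) (auto simp: c_def ne)
    ultimately show ?thesis using finT t by (simp add: sum_subtractf)
  qed
  hence "c t1 = 0" using ind t unfolding cols_indep_def by blast
  thus False by (simp add: c_def)
qed

lemma cols_indep_lin_indpt:
  fixes A :: "'a mat"
  assumes A: "A \<in> carrier_mat n k" and T: "T \<subseteq> {..<k}" and ind: "cols_indep A n T"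
  shows "lin_indpt (col A ` T)"
proof
  assume "lin_dep (col A ` T)"
  then obtain S a v where S: "finite S" "S \<subseteq> col A ` T" "lincomb a S = 0\<^sub>v n" "v \<in> S" "a v \<noteq> 0"
    unfolding lin_dep_def by auto
  have finT: "finite T" using T finite_subset by blast
  define T' where "T' = {t\<in>T. col A t \<in> S}"
  have imT': "col A ` T' = S" using S(2) unfolding T'_def by auto
  have injT': "inj_on (col A) T'"
    using cols_indep_inj_on_col[OF A T ind] unfolding T'_def by (auto intro: inj_on_subset)
  have "col A ` T \<subseteq> carrier_vec n" using A by (auto simp: col_dim)
  hence Scar: "S \<subseteq> carrier_vec n" using S(2) by blast
  define c where "c = (\<lambda>t. if col A t \<in> S then a (col A t) else 0)"
  have "(\<Sum>t\<in>T. c t * A $$ (i,t)) = 0" if i: "i < n" for i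
  proof -
    have "(\<Sum>t\<in>T. c t * A $$ (i,t)) = (\<Sum>t\<in>T. if col A t \<in> S then a (col A t) * A $$ (i,t) else 0)"
      by (rule sum.cong) (auto simp: c_def)
    also have "\<dots> = (\<Sum>t\<in>T'. a (col A t) * A $$ (i,t))"
      unfolding T'_def using finT by (simp add: sum.inter_filter)
    also have "\<dots> = (\<Sum>t\<in>T'. a (col A t) * col A t $ i)"
      by (rule sum.cong) (use T A i in \<open>auto simp: T'_def\<close>)
    also have "\<dots> = (\<Sum>x\<in>S. a x * x $ i)"
      using sum.reindex[OF injT', of "\<lambda>x. a x * x $ i"] imT' by simp
    also have "\<dots> = lincomb a S $ i" using lincomb_index[OF i Scar] by simp
    finally show ?thesis using S(3) i by simp
  qed
  hence "\<forall>t\<in>T. c t = 0" using ind unfolding cols_indep_def by blast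
  moreover obtain t0 where "t0 \<in> T" "v = col A t0" using S(2,4) by auto
  ultimately show False using S(4,5) by (auto simp: c_def)
qed

lemma lin_indpt_cols_indep:
  fixes A :: "'a mat"
  assumes A: "A \<in> carrier_mat n k" and T: "T \<subseteq> {..<k}" and inj: "inj_on (col A) T"
    and li: "lin_indpt (col A ` T)"
  shows "cols_indep A n T"
  unfolding cols_indep_def
proof (intro allI impI ballI)
  fix c t assume h: "\<forall>i<n. (\<Sum>t\<in>T. c t * A $$ (i,t)) = 0" and t: "t \<in> T"
  define a where "a = (\<lambda>x. c (the_inv_into T (col A) x))"
  have fin: "finite (col A ` T)" using T finite_subset by blast
  have car: "col A ` T \<subseteq> carrier_vec n" using A by (auto simp: col_dim)
  have "lincomb a (col A ` T) = 0\<^sub>v n"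
  proof (rule eq_vecI)
    show "dim_vec (lincomb a (col A ` T)) = dim_vec (0\<^sub>v n)" using lincomb_dim[OF fin car] by simp
    fix i assume "i < dim_vec (0\<^sub>v n)" hence i: "i < n" by simp
    have "lincomb a (col A ` T) $ i = (\<Sum>t\<in>T. a (col A t) * col A t $ i)"
      using lincomb_index[OF i car] sum.reindex[OF inj, of "\<lambda>x. a x * x $ i"] by simp
    also have "\<dots> = (\<Sum>t\<in>T. c t * A $$ (i,t))"
      by (rule sum.cong) (use T A i inj in \<open>auto simp: a_def the_inv_into_f_f\<close>)
    finally show "lincomb a (col A ` T) $ i = 0\<^sub>v n $ i" using h i by simp
  qed
  then have "a (col A t) = 0" using not_lindepD[OF li fin subset_refl] t by auto
  then show "c t = 0" using t inj by (auto simp: a_def the_inv_into_f_f)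
qed

lemma cols_indep_card_le_rank:
  fixes A :: "'a mat"
  assumes A: "A \<in> carrier_mat n k" and T: "T \<subseteq> {..<k}" and ind: "cols_indep A n T"
  shows "card T \<le> rank A"
proof -
  have "col A ` T \<subseteq> set (cols A)" using T A by (auto simp: cols_def)
  from rank_ge_card_indpt[OF A this cols_indep_lin_indpt[OF A T ind]]
  show ?thesis using card_image[OF cols_indep_inj_on_col[OF A T ind]] by simp
qed

text \<open>A maximal independent set of columns containing those of \<open>T\<^sub>1\<close> is pulled back to column indices.\<close>

lemma cols_indep_extend_to_rank:
  fixes A :: "'a mat"
  assumes A: "A \<in> carrier_mat n k" and T1: "T1 \<subseteq> {..<k}" and ind: "cols_indep A n T1"
  shows "\<exists>T. T1 \<subseteq> T \<and> T \<subseteq> {..<k} \<and> cols_indep A n T \<and> card T = rank A"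
proof -
  define U where "U = col A ` T1"
  have cols: "set (cols A) = col A ` {..<k}" using A by (auto simp: cols_def)
  obtain S where S: "finite S" "maximal S (\<lambda>T. T \<subseteq> set (cols A) \<and> lin_indpt T)" "U \<subseteq> S"
    using maximal_exists_superset[of "set (cols A)" "\<lambda>T. T \<subseteq> set (cols A) \<and> lin_indpt T" U]
      cols_indep_lin_indpt[OF A T1 ind] T1 cols unfolding U_def by auto
  have Ssub: "S \<subseteq> col A ` {..<k}" and Sli: "lin_indpt S" using S(2) cols unfolding maximal_def by auto
  have "\<forall>x\<in>S. \<exists>t. t < k \<and> col A t = x" using Ssub by auto
  then obtain g where g: "\<And>x. x \<in> S \<Longrightarrow> g x < k \<and> col A (g x) = x" by metis
  define T where "T = T1 \<union> g ` (S - U)"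
  have finT: "finite T" unfolding T_def using T1 S(1) finite_subset by auto
  have Tk: "T \<subseteq> {..<k}" unfolding T_def using T1 g by auto
  have im: "col A ` T = S"
    unfolding T_def image_Un using g S(3) unfolding U_def by (force simp: image_image)
  have "card T \<le> card T1 + card (g ` (S - U))" unfolding T_def by (rule card_Un_le)
  also have "\<dots> \<le> card U + card (S - U)"
    using card_image[OF cols_indep_inj_on_col[OF A T1 ind]] card_image_le[OF finite_Diff[OF S(1)], of g]
    unfolding U_def by simp
  also have "\<dots> = card S" using S(1,3) by (metis card_Diff_subset finite_subset le_add_diff_inverse card_mono)
  finally have "card T \<le> card S" .
  moreover have "card S \<le> card T" using card_image_le[OF finT, of "col A"] im by simp
  ultimately have cT: "card T = card S" by simp
  have inj: "inj_on (col A) T" using eq_card_imp_inj_on[OF finT, of "col A"] im cT by simp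
  have "cols_indep A n T" by (rule lin_indpt_cols_indep[OF A Tk inj]) (use im Sli in simp)
  thus ?thesis using Tk cT rank_card_indpt[OF A S(2)] T_def by auto
qed

lemma rank_le_rows:
  fixes A :: "'a mat"
  assumes A: "A \<in> carrier_mat n k"
  shows "rank A \<le> n"
proof -
  have "cols_indep A n {}" unfolding cols_indep_def by simp
  then obtain T where T: "T \<subseteq> {..<k}" "cols_indep A n T" "card T = rank A"
    using cols_indep_extend_to_rank[OF A] by blast
  have car: "col A ` T \<subseteq> carrier_vec n" using A by (auto simp: col_dim)
  have "card (col A ` T) \<le> dim" using li_le_dim(2)[OF fin_dim car cols_indep_lin_indpt[OF A T(1,2)]] .
  thus ?thesis using card_image[OF cols_indep_inj_on_col[OF A T(1,2)]] T(3) dim_is_n by simp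
qed

end

lemma leading_submat_carrier: "leading_submat Z m k \<in> carrier_mat m k"
  by (simp add: leading_submat_def)

lemma cols_indep_leading_submat:
  "T \<subseteq> {..<k} \<Longrightarrow> cols_indep (leading_submat Z m k) m T \<longleftrightarrow> cols_indep Z m T"
proof -
  assume "T \<subseteq> {..<k}"
  hence "i < m \<Longrightarrow> (\<Sum>t\<in>T. c t * leading_submat Z m k $$ (i,t)) = (\<Sum>t\<in>T. c t * Z $$ (i,t))" for c i
    by (intro sum.cong) (auto simp: leading_submat_def)
  thus ?thesis unfolding cols_indep_def by simp
qed

lemma cols_indep_card_le_leading_rank:
  "T \<subseteq> {..<k} \<Longrightarrow> cols_indep Z m T \<Longrightarrow> card T \<le> leading_rank Z m k"
  unfolding leading_rank_def mrank_def
  using vec_space.cols_indep_card_le_rank[OF leading_submat_carrier] cols_indep_leading_submat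
  by (metis carrier_matD(1) leading_submat_carrier)

lemma cols_indep_extend_to_leading_rank:
  assumes "T1 \<subseteq> {..<k}" "cols_indep Z m T1"
  shows "\<exists>T. T1 \<subseteq> T \<and> T \<subseteq> {..<k} \<and> cols_indep Z m T \<and> card T = leading_rank Z m k"
  using vec_space.cols_indep_extend_to_rank[OF leading_submat_carrier assms(1)] assms
    cols_indep_leading_submat[OF assms(1)] cols_indep_leading_submat
  unfolding leading_rank_def mrank_def by (metis carrier_matD(1) leading_submat_carrier)

lemma leading_rank_le_rows: "leading_rank Z m k \<le> m"
  unfolding leading_rank_def mrank_def
  by (metis vec_space.rank_le_rows carrier_matD(1) leading_submat_carrier)

lemma leading_rank_le_cols: "leading_rank (Z::'a::field mat) m k \<le> k"
  unfolding leading_rank_def mrank_def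
  by (metis vec_space.rank_le_nc carrier_matD(1) leading_submat_carrier)

lemma cols_indep_subset:
  assumes sub: "T' \<subseteq> T" and fin: "finite T" and ind: "cols_indep Z m T"
  shows "cols_indep Z m T'"
  unfolding cols_indep_def
proof (intro allI impI ballI)
  fix c t assume h: "\<forall>i<m. (\<Sum>t\<in>T'. c t * Z $$ (i,t)) = 0" and t: "t \<in> T'"
  define c' where "c' = (\<lambda>t. if t \<in> T' then c t else 0)"
  have "(\<Sum>t\<in>T. c' t * Z $$ (i,t)) = (\<Sum>t\<in>T'. c' t * Z $$ (i,t))" for i
    by (rule sum.mono_neutral_right[OF fin sub]) (simp add: c'_def)
  also have "(\<Sum>t\<in>T'. c' t * Z $$ (i,t)) = (\<Sum>t\<in>T'. c t * Z $$ (i,t))" for i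
    by (rule sum.cong) (simp_all add: c'_def)
  finally have "\<forall>i<m. (\<Sum>t\<in>T. c' t * Z $$ (i,t)) = 0" using h by simp
  hence "c' t = 0" using ind sub t unfolding cols_indep_def by blast
  thus "c t = 0" using t by (simp add: c'_def)
qed

lemma cols_indep_mono_rows: "m1 \<le> m2 \<Longrightarrow> cols_indep Z m1 T \<Longrightarrow> cols_indep Z m2 T"
  unfolding cols_indep_def by auto

lemma not_cols_indep_insert_span:
  fixes Z :: "'a::field mat"
  assumes fin: "finite T" and ind: "cols_indep Z m T" and s: "s \<notin> T"
    and dep: "\<not> cols_indep Z m (insert s T)"
  shows "\<exists>e. \<forall>i<m. Z $$ (i,s) = (\<Sum>t\<in>T. e t * Z $$ (i,t))"
proof -
  obtain c where c0: "\<forall>i<m. (\<Sum>t\<in>insert s T. c t * Z $$ (i,t)) = 0"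
    and nz: "\<exists>t\<in>insert s T. c t \<noteq> 0"
    using dep unfolding cols_indep_def by blast
  have c: "c s * Z $$ (i,s) + (\<Sum>t\<in>T. c t * Z $$ (i,t)) = 0" if "i < m" for i
    using c0 that fin s by (simp add: sum.insert)
  have cs: "c s \<noteq> 0"
  proof
    assume "c s = 0"
    hence "\<forall>i<m. (\<Sum>t\<in>T. c t * Z $$ (i,t)) = 0" using c by simp
    hence "\<forall>t\<in>T. c t = 0" using ind unfolding cols_indep_def by blast
    thus False using nz \<open>c s = 0\<close> by auto
  qed
  have "Z $$ (i,s) = (\<Sum>t\<in>T. (- c t / c s) * Z $$ (i,t))" if i: "i < m" for i
  proof -
    have "(\<Sum>t\<in>T. (- c t / c s) * Z $$ (i,t)) = (- 1 / c s) * (\<Sum>t\<in>T. c t * Z $$ (i,t))"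
      by (simp add: sum_distrib_left)
    also have "\<dots> = (- 1 / c s) * (- (c s * Z $$ (i,s)))" using c[OF i] by (metis add_eq_0_iff)
    also have "\<dots> = Z $$ (i,s)" using cs by simp
    finally show ?thesis by simp
  qed
  thus ?thesis by (intro exI[of _ "\<lambda>t. - c t / c s"]) blast
qed

text \<open>A relation among all these columns, read in the first \<open>m\<^sub>1\<close> rows and with \<open>T\<^sub>3\<close> rewritten
  through \<open>T\<^sub>1\<close>, is a relation on \<open>T\<^sub>1 \<union> T\<^sub>2\<close>; so its \<open>T\<^sub>2\<close>-coefficients vanish and the
  independence of \<open>T\<^sub>1 \<union> T\<^sub>3\<close> in \<open>m\<^sub>2\<close> rows does the rest.\<close>

lemma cols_indep_union:
  fixes Z :: "'a::field mat"
  assumes m: "m1 \<le> m2"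
    and fin: "finite T1" "finite T2" "finite T3"
    and disj: "T1 \<inter> T2 = {}" "T1 \<inter> T3 = {}" "T2 \<inter> T3 = {}"
    and ind12: "cols_indep Z m1 (T1 \<union> T2)" and ind13: "cols_indep Z m2 (T1 \<union> T3)"
    and span: "\<And>s i. s \<in> T3 \<Longrightarrow> i < m1 \<Longrightarrow> Z $$ (i,s) = (\<Sum>t\<in>T1. E s t * Z $$ (i,t))"
  shows "cols_indep Z m2 (T1 \<union> T2 \<union> T3)"
  unfolding cols_indep_def
proof (intro allI impI)
  fix c assume h: "\<forall>i<m2. (\<Sum>t\<in>T1 \<union> T2 \<union> T3. c t * Z $$ (i,t)) = 0"
  let ?s = "\<lambda>T i. \<Sum>t\<in>T. c t * Z $$ (i,t)"
  have split: "?s (T1 \<union> T2 \<union> T3) i = ?s T1 i + ?s T2 i + ?s T3 i" for i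
    using fin disj by (simp add: sum.union_disjoint Int_Un_distrib2)
  define c' where "c' = (\<lambda>t. if t \<in> T1 then c t + (\<Sum>s\<in>T3. c s * E s t) else c t)"
  have "(\<Sum>t\<in>T1 \<union> T2. c' t * Z $$ (i,t)) = 0" if i: "i < m1" for i
  proof -
    have "(\<Sum>t\<in>T1. (\<Sum>s\<in>T3. c s * E s t) * Z $$ (i,t)) = (\<Sum>s\<in>T3. c s * (\<Sum>t\<in>T1. E s t * Z $$ (i,t)))"
      by (simp add: sum_distrib_left sum_distrib_right sum.swap[of _ T1] mult.assoc)
    also have "\<dots> = ?s T3 i" using span i by simp
    finally have "(\<Sum>t\<in>T1. c' t * Z $$ (i,t)) = ?s T1 i + ?s T3 i"
      by (simp add: c'_def sum.distrib distrib_right)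
    moreover have "(\<Sum>t\<in>T2. c' t * Z $$ (i,t)) = ?s T2 i"
      using disj by (intro sum.cong) (auto simp: c'_def)
    ultimately show ?thesis using fin disj h split[of i] i m by (simp add: sum.union_disjoint ac_simps)
  qed
  hence "\<forall>t\<in>T1 \<union> T2. c' t = 0" using ind12 unfolding cols_indep_def by blast
  hence "\<forall>t\<in>T2. c t = 0" using disj unfolding c'_def by (metis UnCI disjoint_iff)
  hence "\<forall>i<m2. (\<Sum>t\<in>T1 \<union> T3. c t * Z $$ (i,t)) = 0"
    using h split fin disj by (simp add: sum.union_disjoint)
  hence "\<forall>t\<in>T1 \<union> T3. c t = 0" using ind13 unfolding cols_indep_def by blast
  thus "\<forall>t\<in>T1 \<union> T2 \<union> T3. c t = 0" using \<open>\<forall>t\<in>T2. c t = 0\<close> by blast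
qed

text \<open>Extend a basis \<open>T\<^sub>1\<close> of the \<open>m\<^sub>1 \<times> k\<^sub>1\<close> block to bases of the \<open>m\<^sub>1 \<times> k\<^sub>2\<close>
  and \<open>m\<^sub>2 \<times> k\<^sub>1\<close> blocks; their union is independent in the \<open>m\<^sub>2 \<times> k\<^sub>2\<close> block.\<close>

lemma leading_rank_submodular:
  fixes Z :: "'a::field mat"
  assumes m: "m1 \<le> m2" and k: "k1 \<le> k2"
  shows "leading_rank Z m2 k1 + leading_rank Z m1 k2 \<le> leading_rank Z m2 k2 + leading_rank Z m1 k1"
proof -
  obtain T1 where T1: "T1 \<subseteq> {..<k1}" "cols_indep Z m1 T1" "card T1 = leading_rank Z m1 k1"
    using cols_indep_extend_to_leading_rank[of "{}" k1 Z m1] by (auto simp: cols_indep_def)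
  obtain T12 where T12: "T1 \<subseteq> T12" "T12 \<subseteq> {..<k2}" "cols_indep Z m1 T12" "card T12 = leading_rank Z m1 k2"
    using cols_indep_extend_to_leading_rank[OF _ T1(2), of k2] T1(1) k by (meson order_trans lessThan_subset_iff)
  obtain T13 where T13: "T1 \<subseteq> T13" "T13 \<subseteq> {..<k1}" "cols_indep Z m2 T13" "card T13 = leading_rank Z m2 k1"
    using cols_indep_extend_to_leading_rank[OF T1(1) cols_indep_mono_rows[OF m T1(2)]] by auto
  have fin: "finite T1" "finite T12" "finite T13" using T1 T12 T13 by (auto intro: finite_subset)
  have dep: "\<not> cols_indep Z m1 (insert x T1)" if "x \<in> T13" "x \<notin> T1" for x
    using cols_indep_card_le_leading_rank[of "insert x T1" k1 Z m1] T1 T13 that fin(1) by auto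
  have inter: "T12 \<inter> T13 = T1"
  proof (rule ccontr)
    assume "T12 \<inter> T13 \<noteq> T1"
    then obtain x where x: "x \<in> T12" "x \<in> T13" "x \<notin> T1" using T12 T13 by blast
    have "cols_indep Z m1 (insert x T1)" by (rule cols_indep_subset[OF _ fin(2) T12(3)]) (use x T12 in auto)
    thus False using dep x by blast
  qed
  have "\<forall>s\<in>T13 - T1. \<exists>e. \<forall>i<m1. Z $$ (i,s) = (\<Sum>t\<in>T1. e t * Z $$ (i,t))"
    using not_cols_indep_insert_span[OF fin(1) T1(2)] dep by blast
  then obtain E where E: "\<And>s i. s \<in> T13 - T1 \<Longrightarrow> i < m1 \<Longrightarrow> Z $$ (i,s) = (\<Sum>t\<in>T1. E s t * Z $$ (i,t))"
    by metis
  have "cols_indep Z m2 (T1 \<union> (T12 - T1) \<union> (T13 - T1))"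
    by (rule cols_indep_union[OF m _ _ _ _ _ _ _ _ E])
      (use fin inter T12 T13 in \<open>auto simp: Un_absorb1\<close>)
  moreover have "T1 \<union> (T12 - T1) \<union> (T13 - T1) = T12 \<union> T13" using T12 T13 by auto
  ultimately have "card (T12 \<union> T13) \<le> leading_rank Z m2 k2"
    using cols_indep_card_le_leading_rank[of "T12 \<union> T13" k2 Z m2] T12(2) T13(2) k
    by (metis Un_least lessThan_subset_iff order_trans)
  moreover have "card (T12 \<union> T13) + card T1 = card T12 + card T13"
    using card_Un_Int[OF fin(2,3)] inter by simp
  ultimately show ?thesis using T1 T12 T13 by simp
qed

lemma cols_indep_pivots:
  fixes Z :: "'a::field mat"
  assumes fin: "finite T"
    and piv: "\<And>t. t \<in> T \<Longrightarrow> \<pi> t < m \<and> Z $$ (\<pi> t, t) \<noteq> 0"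
    and later: "\<And>t t'. t \<in> T \<Longrightarrow> t' \<in> T \<Longrightarrow> t < t' \<Longrightarrow> Z $$ (\<pi> t, t') = 0"
  shows "cols_indep Z m T"
  unfolding cols_indep_def
proof (intro allI impI ballI, rule ccontr)
  fix c t assume h: "\<forall>i<m. (\<Sum>t\<in>T. c t * Z $$ (i,t)) = 0" and "t \<in> T" "c t \<noteq> 0"
  define t0 where "t0 = Min {t\<in>T. c t \<noteq> 0}"
  have fin0: "finite {t\<in>T. c t \<noteq> 0}" using fin by simp
  have t0: "t0 \<in> T" "c t0 \<noteq> 0"
    using Min_in[OF fin0] \<open>t \<in> T\<close> \<open>c t \<noteq> 0\<close> unfolding t0_def by auto
  have below: "c t' = 0" if "t' \<in> T" "t' < t0" for t'
    using Min_le[OF fin0, of t'] that unfolding t0_def by (auto simp: not_le[symmetric])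
  have "(\<Sum>t\<in>T. c t * Z $$ (\<pi> t0, t)) = (\<Sum>t\<in>{t0}. c t * Z $$ (\<pi> t0, t))"
    by (rule sum.mono_neutral_right)
      (use fin t0 below later in \<open>auto dest: linorder_neqE_nat\<close>)
  hence "c t0 * Z $$ (\<pi> t0, t0) = 0" using h piv[OF t0(1)] by simp
  thus False using t0 piv by simp
qed

text \<open>The block shape of \<open>\<zeta>(V)\<close>, with \<open>a = d\<^sub>y\<close> and \<open>c = d\<^sub>x\<close>.\<close>

locale identity_frame =
  fixes Z :: "'a::field mat" and a c :: nat
  assumes upper_right: "\<And>i j. i < a \<Longrightarrow> c \<le> j \<Longrightarrow> j < c + a \<Longrightarrow> Z $$ (i,j) = (if i = j - c then 1 else 0)"
    and lower_left: "\<And>i j. a \<le> i \<Longrightarrow> i < a + c \<Longrightarrow> j < c \<Longrightarrow> Z $$ (i,j) = (if i - a = j then 1 else 0)"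
    and lower_right: "\<And>i j. a \<le> i \<Longrightarrow> i < a + c \<Longrightarrow> c \<le> j \<Longrightarrow> j < c + a \<Longrightarrow> Z $$ (i,j) = 0"
begin

definition frame_pivot :: "nat \<Rightarrow> nat" where
  "frame_pivot t = (if t < c then a + t else t - c)"

lemma frame_pivot_diag: "t < c + a \<Longrightarrow> Z $$ (frame_pivot t, t) = 1"
  by (auto simp: frame_pivot_def upper_right lower_left)

lemma frame_pivot_later: "t < t' \<Longrightarrow> t' < c + a \<Longrightarrow> Z $$ (frame_pivot t, t') = 0"
  by (cases "t' < c") (auto simp: frame_pivot_def upper_right lower_left lower_right)

lemma cols_indep_frame:
  "T \<subseteq> {..<c + a} \<Longrightarrow> frame_pivot ` T \<subseteq> {..<m} \<Longrightarrow> cols_indep Z m T"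
  by (rule cols_indep_pivots[of T frame_pivot])
    (auto simp: frame_pivot_diag frame_pivot_later intro: finite_subset)

lemma leading_rank_full_rows:
  assumes m: "m \<le> a + c"
  shows "leading_rank Z m (c + a) = m"
proof -
  define T where "T = {..<m - a} \<union> (\<lambda>p. c + p) ` {..<min m a}"
  have T: "T \<subseteq> {..<c + a}" "frame_pivot ` T \<subseteq> {..<m}"
    unfolding T_def frame_pivot_def using m by auto
  have "card T = (m - a) + min m a"
    unfolding T_def by (subst card_Un_disjoint) (use m in \<open>auto simp: card_image\<close>)
  hence "m \<le> leading_rank Z m (c + a)"
    using cols_indep_card_le_leading_rank[OF T(1) cols_indep_frame[OF T]] by simp
  thus ?thesis using leading_rank_le_rows[of Z m "c + a"] by simp
qed

lemma leading_rank_full_cols: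
  assumes k: "k \<le> c + a"
  shows "leading_rank Z (a + c) k = k"
proof -
  have T: "{..<k} \<subseteq> {..<c + a}" "frame_pivot ` {..<k} \<subseteq> {..<a + c}"
    unfolding frame_pivot_def using k by auto
  show ?thesis
    using cols_indep_card_le_leading_rank[OF subset_refl cols_indep_frame[OF T]]
      leading_rank_le_cols[of Z "a + c" k] by simp
qed

end

section \<open>Blocks\<close>

lemma offs_0 [simp]: "offs sz 0 = 0"
  by (simp add: offs_def)

lemma offs_mono: "i \<le> j \<Longrightarrow> offs sz i \<le> offs sz j"
  by (metis le_Suc_ex offs_def sum_list_append take_add le_add1)

lemma offs_Suc: "k < length sz \<Longrightarrow> offs sz (Suc k) = offs sz k + sz ! k"
  by (simp add: offs_def take_Suc_conv_app_nth)

lemma offs_eq_sum_list: "length sz \<le> i \<Longrightarrow> offs sz i = sum_list sz"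
  by (simp add: offs_def)

lemma offs_le_sum_list: "offs sz i \<le> sum_list sz"
  using offs_mono[of i "max i (length sz)" sz] offs_eq_sum_list[of sz "max i (length sz)"] by simp

lemma less_offs_iff_blk_less:
  assumes p: "p < sum_list sz"
  shows "p < offs sz I \<longleftrightarrow> blk sz p < I"
proof
  assume h: "p < offs sz I"
  then obtain I' where "I = Suc I'" by (cases I) auto
  moreover have "blk sz p \<le> I'" unfolding blk_def by (rule Least_le) (use h \<open>I = Suc I'\<close> in simp)
  ultimately show "blk sz p < I" by simp
next
  assume h: "blk sz p < I"
  have "p < offs sz (Suc (blk sz p))"
    unfolding blk_def by (rule LeastI[of _ "length sz"]) (use p offs_eq_sum_list[of sz] in simp)
  also have "\<dots> \<le> offs sz I" using h by (intro offs_mono) simp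
  finally show "p < offs sz I" .
qed

lemma blk_less_length: "p < sum_list sz \<Longrightarrow> blk sz p < length sz"
  using less_offs_iff_blk_less[of p sz "length sz"] offs_eq_sum_list[of sz "length sz"] by simp

lemma blk_bounds: "p < sum_list sz \<Longrightarrow> offs sz (blk sz p) \<le> p \<and> p < offs sz (Suc (blk sz p))"
  using less_offs_iff_blk_less[of p sz "blk sz p"] less_offs_iff_blk_less[of p sz "Suc (blk sz p)"] by simp

lemma in_blockset_iff: "p < sum_list sz \<Longrightarrow> p \<in> blockset sz k \<longleftrightarrow> blk sz p = k"
  unfolding blockset_def using less_offs_iff_blk_less[of p sz k] less_offs_iff_blk_less[of p sz "Suc k"] by auto

lemma blockset_less_sum_list: "p \<in> blockset sz k \<Longrightarrow> p < sum_list sz"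
  unfolding blockset_def using offs_le_sum_list[of sz "Suc k"] by auto

lemma blk_eqI: "offs sz k \<le> p \<Longrightarrow> p < offs sz (Suc k) \<Longrightarrow> blk sz p = k"
  using in_blockset_iff[of p sz k] blockset_less_sum_list[of p sz k] unfolding blockset_def by auto

lemma blk_mono: "p \<le> p' \<Longrightarrow> p' < sum_list sz \<Longrightarrow> blk sz p \<le> blk sz p'"
  using blk_bounds[of p' sz] less_offs_iff_blk_less[of p sz "Suc (blk sz p')"] by simp

lemma block_preserving_blk:
  assumes bp: "block_preserving sz s" and p: "p < sum_list sz"
  shows "blk sz (s p) = blk sz p"
proof -
  have "s p < sum_list sz" using bp p unfolding block_preserving_def by (metis lessThan_iff permutes_in_image)
  moreover have "s p \<in> blockset sz (blk sz p)"
    using bp p in_blockset_iff[OF p] blk_less_length[OF p] unfolding block_preserving_def by blast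
  ultimately show ?thesis using in_blockset_iff by blast
qed

lemma dcoset_self: "u \<in> dcoset rs cs u"
proof -
  have "block_preserving sz id" for sz unfolding block_preserving_def by (auto intro: permutes_id)
  moreover have "u = id \<circ> u \<circ> id" by simp
  ultimately show ?thesis unfolding dcoset_def by blast
qed

lemma ball_atLeastAtMost_1_iff: "(\<forall>I\<in>{1..n}. P I) \<longleftrightarrow> (\<forall>I<n. P (Suc I))"
  unfolding image_Suc_lessThan[symmetric] by blast

lemma blockwise_increasing_iff:
  "(\<forall>I<length sz. \<forall>p\<in>blockset sz I. \<forall>p'\<in>blockset sz I. p < p' \<longrightarrow> u p < u p') \<longleftrightarrow>
   (\<forall>p p'. p < p' \<and> p' < sum_list sz \<and> blk sz p = blk sz p' \<longrightarrow> u p < u p')"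
  (is "?blocks \<longleftrightarrow> ?pairs")
proof
  have row: "p \<in> blockset sz I \<longleftrightarrow> p < sum_list sz \<and> blk sz p = I" for p I
    using blockset_less_sum_list in_blockset_iff by blast
  show ?pairs if blocks: ?blocks
  proof (intro allI impI)
    fix p p' assume h: "p < p' \<and> p' < sum_list sz \<and> blk sz p = blk sz p'"
    have "p \<in> blockset sz (blk sz p')" "p' \<in> blockset sz (blk sz p')"
      using row[of p "blk sz p'"] row[of p' "blk sz p'"] h by simp_all
    moreover have "blk sz p' < length sz" using blk_less_length[of p' sz] h by simp
    ultimately show "u p < u p'" using blocks h by blast
  qed
  show ?blocks if pairs: ?pairs
  proof (intro allI impI ballI)
    fix I p p' assume h: "p \<in> blockset sz I" "p' \<in> blockset sz I" "p < p'"
    hence "p' < sum_list sz" "blk sz p = blk sz p'" using row[of p I] row[of p' I] by simp_all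
    thus "u p < u p'" using pairs[rule_format, of p p'] h(3) by blast
  qed
qed

lemma blockwise_order_reflecting_iff:
  assumes u: "\<forall>p<n. u p < sum_list sz"
  shows "(\<forall>J<length sz. \<forall>p<n. \<forall>p'<n. u p \<in> blockset sz J \<and> u p' \<in> blockset sz J \<and> u p < u p' \<longrightarrow> p < p')
      \<longleftrightarrow> (\<forall>p p'. p < n \<and> p' < n \<and> blk sz (u p) = blk sz (u p') \<and> u p < u p' \<longrightarrow> p < p')"
    (is "?blocks \<longleftrightarrow> ?pairs")
proof
  have col: "p < n \<Longrightarrow> u p \<in> blockset sz J \<longleftrightarrow> blk sz (u p) = J" for p J
    using in_blockset_iff u by blast
  show ?pairs if blocks: ?blocks
  proof (intro allI impI)
    fix p p' assume h: "p < n \<and> p' < n \<and> blk sz (u p) = blk sz (u p') \<and> u p < u p'"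
    have "u p \<in> blockset sz (blk sz (u p))" "u p' \<in> blockset sz (blk sz (u p))"
      using col[of p "blk sz (u p)"] col[of p' "blk sz (u p)"] h by simp_all
    moreover have "blk sz (u p) < length sz" using blk_less_length u h by blast
    ultimately show "p < p'" using blocks h by blast
  qed
  show ?blocks if pairs: ?pairs
  proof (intro allI impI)
    fix J p p' assume h: "p < n" "p' < n" "u p \<in> blockset sz J \<and> u p' \<in> blockset sz J \<and> u p < u p'"
    hence "blk sz (u p) = blk sz (u p')" using col[of p J] col[of p' J] by simp
    thus "p < p'" using pairs[rule_format, of p p'] h by blast
  qed
qed

lemma permutes_card_less:
  assumes perm: "u permutes {..<n}" and p: "p < n"
  shows "card {p'. p' < n \<and> u p' < u p} = u p"
proof -
  have "u p < n" using permutes_in_image[OF perm] p by simp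
  have "{..<u p} \<subseteq> u ` {p'. p' < n \<and> u p' < u p}"
  proof
    fix q assume q: "q \<in> {..<u p}"
    hence "q \<in> u ` {..<n}" using \<open>u p < n\<close> permutes_image[OF perm] by simp
    thus "q \<in> u ` {p'. p' < n \<and> u p' < u p}" using q by auto
  qed
  hence "u ` {p'. p' < n \<and> u p' < u p} = {..<u p}" by auto
  moreover have "inj_on u {p'. p' < n \<and> u p' < u p}"
    by (rule inj_on_subset[OF permutes_inj[OF perm] subset_UNIV])
  ultimately show ?thesis using card_image card_lessThan by metis
qed

lemma card_less_eq_sum_card_eq:
  assumes "finite {x. P x}"
  shows "card {x. P x \<and> f x < n} = (\<Sum>k<n. card {x. P x \<and> f x = (k::nat)})"
proof (induction n)
  case (Suc n)
  have "{x. P x \<and> f x < Suc n} = {x. P x \<and> f x < n} \<union> {x. P x \<and> f x = n}" by auto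
  moreover have "finite {x. P x \<and> f x < n}" "finite {x. P x \<and> f x = n}"
    by (rule finite_subset[OF _ assms], blast)+
  ultimately show ?case using Suc by (simp add: card_Un_disjoint disjoint_iff)
qed simp

lemma downward_closed_eq_interval:
  fixes D :: "nat set"
  assumes fin: "finite D" and lo: "\<forall>q\<in>D. a \<le> q"
    and dc: "\<forall>q\<in>D. \<forall>q'. a \<le> q' \<and> q' < q \<longrightarrow> q' \<in> D"
  shows "D = {a..<a + card D}"
proof -
  have "D \<subseteq> {a..<a + card D}"
  proof
    fix q assume q: "q \<in> D"
    have "{a..q} \<subseteq> D" using q dc by (auto simp: le_less)
    hence "card {a..q} \<le> card D" using fin by (rule card_mono[rotated])
    thus "q \<in> {a..<a + card D}" using lo q by auto
  qed
  thus ?thesis using card_subset_eq[of "{a..<a + card D}" D] by simp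
qed

lemma sum_bcount_row:
  "(\<Sum>J<N. bcount b (Suc I) (Suc J)) = (int (b (Suc I) N) - int (b I N)) - (int (b (Suc I) 0) - int (b I 0))"
  unfolding bcount_def
  using sum_lessThan_telescope[of "\<lambda>J. int (b (Suc I) J) - int (b I J)" N] by (simp add: algebra_simps)

lemma sum_bcount_rectangle:
  "(\<Sum>I<M. \<Sum>J<N. bcount b (Suc I) (Suc J)) = int (b M N) - int (b 0 N) - int (b M 0) + int (b 0 0)"
  unfolding sum_bcount_row
  using sum_lessThan_telescope[of "\<lambda>I. int (b I N) - int (b I 0)" M] by (simp add: algebra_simps)

section \<open>The Zelevinsky permutation of a block rank array\<close>

text \<open>The combinatorial content of the Zelevinsky permutation needs only that \<open>b I J\<close>, the intended
  number of ones in block rows \<open>< I\<close> and block columns \<open>< J\<close>, has the right margins and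
  nonnegative mixed differences.\<close>

locale block_rank_array =
  fixes rs cs :: "nat list" and b :: "nat \<Rightarrow> nat \<Rightarrow> nat"
  assumes length_eq: "length cs = length rs"
    and sum_list_eq: "sum_list cs = sum_list rs"
    and b_last_col: "\<And>I. I \<le> length rs \<Longrightarrow> b I (length rs) = offs rs I"
    and b_last_row: "\<And>J. J \<le> length rs \<Longrightarrow> b (length rs) J = offs cs J"
    and b_first_row: "\<And>J. b 0 J = 0" and b_first_col: "\<And>I. b I 0 = 0"
    and bcount_nonneg: "\<And>I J. I < length rs \<Longrightarrow> J < length rs \<Longrightarrow> 0 \<le> bcount b (Suc I) (Suc J)"
begin

abbreviation "L \<equiv> length rs"
abbreviation "d \<equiv> sum_list rs"

definition row_prefix :: "nat \<Rightarrow> nat \<Rightarrow> int" where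
  "row_prefix I J = int (b (Suc I) J) - int (b I J)"

definition block_pos :: "nat \<Rightarrow> nat" where
  "block_pos p = p - offs rs (blk rs p)"

text \<open>Within block row \<open>I\<close> the ones run northwest to southeast, so the row at position \<open>k\<close> of the
  block has its one in the first block column \<open>J\<close> with \<open>k < row_prefix I (J + 1)\<close>.\<close>

definition target_block :: "nat \<Rightarrow> nat" where
  "target_block p = (LEAST J. int (block_pos p) < row_prefix (blk rs p) (Suc J))"

definition block_count :: "(nat \<Rightarrow> nat) \<Rightarrow> nat \<Rightarrow> nat \<Rightarrow> nat" where
  "block_count u I J = card {p. p < d \<and> blk rs p = I \<and> blk cs (u p) = J}"

definition lex_before :: "nat \<Rightarrow> nat \<Rightarrow> bool" where
  "lex_before p' p \<longleftrightarrow> target_block p' < target_block p \<or> (target_block p' = target_block p \<and> p' < p)"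

text \<open>Sending each row to its rank in the order \<open>lex_before\<close> fills every block column from the top,
  in order of rows.\<close>

definition zel_perm :: "nat \<Rightarrow> nat" where
  "zel_perm p = (if p < d then card {p'. p' < d \<and> lex_before p' p} else p)"

lemma row_prefix_0: "row_prefix I 0 = 0"
  by (simp add: row_prefix_def b_first_col)

lemma row_prefix_L: "I < L \<Longrightarrow> row_prefix I L = int (rs ! I)"
  by (simp add: row_prefix_def b_last_col offs_Suc)

lemma bcount_eq_row_prefix_diff: "bcount b (Suc I) (Suc J) = row_prefix I (Suc J) - row_prefix I J"
  by (simp add: row_prefix_def bcount_def)

lemma row_prefix_mono:
  assumes I: "I < L" and "J \<le> J'" "J' \<le> L"
  shows "row_prefix I J \<le> row_prefix I J'"
  using assms(2,3)
proof (induction J' rule: dec_induct)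
  case (step J')
  thus ?case using bcount_nonneg[OF I, of J'] bcount_eq_row_prefix_diff[of I J'] by simp
qed simp

lemma row_prefix_bounds: "I < L \<Longrightarrow> J \<le> L \<Longrightarrow> 0 \<le> row_prefix I J \<and> row_prefix I J \<le> int (rs ! I)"
  using row_prefix_mono[of I 0 J] row_prefix_mono[of I J L] row_prefix_0 row_prefix_L by simp

lemma block_pos_less: "p < d \<Longrightarrow> block_pos p < rs ! blk rs p"
  using blk_bounds[of p rs] offs_Suc[of "blk rs p" rs] blk_less_length[of p rs]
  unfolding block_pos_def by linarith

lemma target_block_less_iff:
  assumes p: "p < d" and J: "J \<le> L"
  shows "target_block p < J \<longleftrightarrow> int (block_pos p) < row_prefix (blk rs p) J"
proof -
  define I where "I = blk rs p"
  have I: "I < L" unfolding I_def using blk_less_length[OF p] .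
  have "Suc (L - 1) = L" using I by simp
  hence "int (block_pos p) < row_prefix I (Suc (L - 1))"
    using block_pos_less[OF p] row_prefix_L[OF I] unfolding I_def by simp
  hence P: "int (block_pos p) < row_prefix I (Suc (target_block p))"
    unfolding target_block_def I_def[symmetric] by (rule LeastI)
  show ?thesis
  proof
    assume "target_block p < J"
    thus "int (block_pos p) < row_prefix (blk rs p) J"
      using P row_prefix_mono[OF I, of "Suc (target_block p)" J] J unfolding I_def by simp
  next
    assume h: "int (block_pos p) < row_prefix (blk rs p) J"
    then obtain J' where J': "J = Suc J'" using row_prefix_0 by (cases J) auto
    have "target_block p \<le> J'" unfolding target_block_def by (rule Least_le) (use h J' in simp)
    thus "target_block p < J" using J' by simp
  qed
qed

lemma target_block_less_L: "p < d \<Longrightarrow> target_block p < L"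
  using target_block_less_iff[of p L] block_pos_less[of p] row_prefix_L[of "blk rs p"]
    blk_less_length[of p rs] by simp

lemma target_block_mono:
  assumes "p \<le> p'" "p' < d" "blk rs p = blk rs p'"
  shows "target_block p \<le> target_block p'"
proof -
  have J: "Suc (target_block p') \<le> L" using target_block_less_L[OF assms(2)] by simp
  have "block_pos p \<le> block_pos p'" using assms by (simp add: block_pos_def)
  thus ?thesis
    using target_block_less_iff[OF _ J, of p] target_block_less_iff[OF assms(2) J] assms by simp
qed

lemma block_row_eq: "{p. p < d \<and> blk rs p = I} = {offs rs I..<offs rs (Suc I)}"
proof (rule Set.set_eqI, rule iffI)
  fix p assume "p \<in> {p. p < d \<and> blk rs p = I}"
  thus "p \<in> {offs rs I..<offs rs (Suc I)}" using blk_bounds[of p rs] by auto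
next
  fix p assume p: "p \<in> {offs rs I..<offs rs (Suc I)}"
  hence "p < d" using offs_le_sum_list[of rs "Suc I"] by simp
  thus "p \<in> {p. p < d \<and> blk rs p = I}" using p blk_eqI[of rs I p] by simp
qed

lemma card_target_block_less:
  assumes I: "I < L" and J: "J \<le> L"
  shows "int (card {p. p < d \<and> blk rs p = I \<and> target_block p < J}) = row_prefix I J"
proof -
  have "{p. p < d \<and> blk rs p = I \<and> target_block p < J} =
      {p \<in> {p. p < d \<and> blk rs p = I}. int (block_pos p) < row_prefix I J}"
    using target_block_less_iff[OF _ J] by auto
  also have "\<dots> = {p \<in> {offs rs I..<offs rs (Suc I)}. int (p - offs rs I) < row_prefix I J}"
    unfolding block_row_eq by (rule Collect_cong) (auto simp: block_pos_def blk_eqI)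
  also have "\<dots> = {offs rs I..<offs rs I + nat (row_prefix I J)}"
    using row_prefix_bounds[OF I J] offs_Suc[of I rs] I by auto
  finally show ?thesis using row_prefix_bounds[OF I J] by simp
qed

lemma card_target_block_eq:
  assumes I: "I < L" and J: "J < L"
  shows "int (card {p. p < d \<and> blk rs p = I \<and> target_block p = J}) = bcount b (Suc I) (Suc J)"
proof -
  have "{p. p < d \<and> blk rs p = I \<and> target_block p < Suc J} =
      {p. p < d \<and> blk rs p = I \<and> target_block p < J} \<union> {p. p < d \<and> blk rs p = I \<and> target_block p = J}"
    by auto
  moreover have "card \<dots> = card {p. p < d \<and> blk rs p = I \<and> target_block p < J}
      + card {p. p < d \<and> blk rs p = I \<and> target_block p = J}"
    by (rule card_Un_disjoint) auto
  ultimately show ?thesis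
    using card_target_block_less[OF I, of "Suc J"] card_target_block_less[OF I, of J] J
      bcount_eq_row_prefix_diff[of I J] by simp
qed

lemma card_target_block_less_total:
  assumes J: "J \<le> L"
  shows "card {p. p < d \<and> target_block p < J} = offs cs J"
proof -
  have "{p. p < d \<and> target_block p < J} = {p. (p < d \<and> target_block p < J) \<and> blk rs p < L}"
    using blk_less_length[of _ rs] by blast
  hence "card {p. p < d \<and> target_block p < J} = card {p. (p < d \<and> target_block p < J) \<and> blk rs p < L}"
    by simp
  also have "\<dots> = (\<Sum>I<L. card {p. (p < d \<and> target_block p < J) \<and> blk rs p = I})"
    by (rule card_less_eq_sum_card_eq) auto
  finally have "int (card {p. p < d \<and> target_block p < J}) =
      (\<Sum>I<L. int (card {p. p < d \<and> blk rs p = I \<and> target_block p < J}))"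
    by (simp add: conj_ac)
  also have "\<dots> = (\<Sum>I<L. row_prefix I J)" using card_target_block_less J by simp
  also have "\<dots> = int (b L J) - int (b 0 J)"
    unfolding row_prefix_def by (rule sum_lessThan_telescope)
  finally show ?thesis using b_last_row[OF J] b_first_row by simp
qed

lemma zel_perm_lex:
  assumes "p1 < d" "p2 < d" "lex_before p1 p2"
  shows "zel_perm p1 < zel_perm p2"
proof -
  have "{p'. p' < d \<and> lex_before p' p1} \<subset> {p'. p' < d \<and> lex_before p' p2}"
    using assms unfolding lex_before_def by auto
  thus ?thesis using assms(1,2) by (simp add: zel_perm_def psubset_card_mono)
qed

lemma zel_perm_permutes: "zel_perm permutes {..<d}"
proof -
  have lt: "zel_perm p < d" if "p < d" for p
  proof -
    have "{p'. p' < d \<and> lex_before p' p} \<subset> {..<d}" using that by (auto simp: lex_before_def)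
    hence "card {p'. p' < d \<and> lex_before p' p} < card {..<d}" by (rule psubset_card_mono[rotated]) simp
    thus ?thesis using that by (simp add: zel_perm_def)
  qed
  have inj: "inj_on zel_perm {..<d}"
  proof (rule linorder_inj_onI)
    fix x y assume xy: "x < y" "x \<in> {..<d}" "y \<in> {..<d}"
    hence "lex_before x y \<or> lex_before y x" by (auto simp: lex_before_def)
    thus "zel_perm x \<noteq> zel_perm y" using zel_perm_lex[of x y] zel_perm_lex[of y x] xy by auto
  qed auto
  have "zel_perm ` {..<d} = {..<d}" by (rule endo_inj_surj) (use lt inj in auto)
  thus ?thesis using inj by (intro bij_imp_permutes) (auto simp: bij_betw_def zel_perm_def)
qed

lemma blk_zel_perm:
  assumes p: "p < d"
  shows "blk cs (zel_perm p) = target_block p"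
proof -
  have J: "target_block p < L" by (rule target_block_less_L[OF p])
  have "{p'. p' < d \<and> target_block p' < target_block p} \<subseteq> {p'. p' < d \<and> lex_before p' p}"
    by (auto simp: lex_before_def)
  hence "card {p'. p' < d \<and> target_block p' < target_block p} \<le> card {p'. p' < d \<and> lex_before p' p}"
    by (rule card_mono[rotated]) simp
  hence lo: "offs cs (target_block p) \<le> zel_perm p"
    using card_target_block_less_total[of "target_block p"] J p by (simp add: zel_perm_def)
  have "{p'. p' < d \<and> lex_before p' p} \<subset> {p'. p' < d \<and> target_block p' < Suc (target_block p)}"
    using p by (auto simp: lex_before_def)
  hence "card {p'. p' < d \<and> lex_before p' p} < card {p'. p' < d \<and> target_block p' < Suc (target_block p)}"
    by (rule psubset_card_mono[rotated]) simp
  hence hi: "zel_perm p < offs cs (Suc (target_block p))"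
    using card_target_block_less_total[of "Suc (target_block p)"] J p by (simp add: zel_perm_def)
  show ?thesis by (rule blk_eqI[OF lo hi])
qed

lemma zel_cond_iff:
  "zel_cond rs cs b u \<longleftrightarrow> u permutes {..<d} \<and>
     (\<forall>I<L. \<forall>J<L. int (block_count u I J) = bcount b (Suc I) (Suc J)) \<and>
     (\<forall>p p'. p < p' \<and> p' < d \<and> blk rs p = blk rs p' \<longrightarrow> u p < u p') \<and>
     (\<forall>p p'. p < d \<and> p' < d \<and> blk cs (u p) = blk cs (u p') \<and> u p < u p' \<longrightarrow> p < p')"
proof (cases "u permutes {..<d}")
  case perm: True
  have ud: "\<forall>p<d. u p < sum_list cs" using permutes_in_image[OF perm] sum_list_eq by simp
  have "{p \<in> blockset rs I. u p \<in> blockset cs J} = {p. p < d \<and> blk rs p = I \<and> blk cs (u p) = J}" for I J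
    using blockset_less_sum_list in_blockset_iff ud by blast
  hence counts: "(\<forall>I\<in>{1..L}. \<forall>J\<in>{1..length cs}.
        int (card {p \<in> blockset rs (I-1). u p \<in> blockset cs (J-1)}) = bcount b I J) \<longleftrightarrow>
      (\<forall>I<L. \<forall>J<L. int (block_count u I J) = bcount b (Suc I) (Suc J))"
    unfolding ball_atLeastAtMost_1_iff length_eq block_count_def by simp
  show ?thesis
    unfolding zel_cond_def using perm counts blockwise_increasing_iff[of rs u]
      blockwise_order_reflecting_iff[OF ud] by simp
qed (simp add: zel_cond_def)

lemma zel_cond_permutes: "zel_cond rs cs b u \<Longrightarrow> u permutes {..<d}"
  unfolding zel_cond_iff by blast

lemma zel_cond_block_count:
  "zel_cond rs cs b u \<Longrightarrow> I < L \<Longrightarrow> J < L \<Longrightarrow> int (block_count u I J) = bcount b (Suc I) (Suc J)"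
  unfolding zel_cond_iff by blast

lemma zel_cond_row_mono:
  "zel_cond rs cs b u \<Longrightarrow> p < p' \<Longrightarrow> p' < d \<Longrightarrow> blk rs p = blk rs p' \<Longrightarrow> u p < u p'"
  unfolding zel_cond_iff by blast

lemma zel_cond_col_mono:
  "zel_cond rs cs b u \<Longrightarrow> p < d \<Longrightarrow> p' < d \<Longrightarrow> blk cs (u p) = blk cs (u p') \<Longrightarrow> u p < u p'
    \<Longrightarrow> p < p'"
  unfolding zel_cond_iff by blast

lemma zel_cond_less_sum_list:
  "zel_cond rs cs b u \<Longrightarrow> p < d \<Longrightarrow> u p < sum_list cs"
  using zel_cond_permutes permutes_in_image sum_list_eq by fastforce

lemma zel_cond_zel_perm: "zel_cond rs cs b zel_perm"
  unfolding zel_cond_iff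
proof (intro conjI allI impI zel_perm_permutes)
  fix I J assume "I < L" "J < L"
  have "{p. p < d \<and> blk rs p = I \<and> blk cs (zel_perm p) = J} = {p. p < d \<and> blk rs p = I \<and> target_block p = J}"
    using blk_zel_perm by auto
  thus "int (block_count zel_perm I J) = bcount b (Suc I) (Suc J)"
    unfolding block_count_def using card_target_block_eq[OF \<open>I < L\<close> \<open>J < L\<close>] by simp
next
  fix p p' assume h: "p < p' \<and> p' < d \<and> blk rs p = blk rs p'"
  hence "lex_before p p'" using target_block_mono[of p p'] by (auto simp: lex_before_def le_less)
  thus "zel_perm p < zel_perm p'" using zel_perm_lex h by simp
next
  fix p p' assume h: "p < d \<and> p' < d \<and> blk cs (zel_perm p) = blk cs (zel_perm p') \<and> zel_perm p < zel_perm p'"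
  hence "\<not> lex_before p' p" using zel_perm_lex[of p' p] by auto
  moreover have "target_block p = target_block p'" using h blk_zel_perm by metis
  moreover have "p \<noteq> p'" using h by auto
  ultimately show "p < p'" by (auto simp: lex_before_def)
qed

lemma zel_cond_card_cols_less:
  assumes sol: "zel_cond rs cs b u" and I: "I < L" and J: "J \<le> L"
  shows "int (card {p. p < d \<and> blk rs p = I \<and> blk cs (u p) < J}) = row_prefix I J"
proof -
  have "card {p. p < d \<and> blk rs p = I \<and> blk cs (u p) < J} = (\<Sum>J'<J. block_count u I J')"
    using card_less_eq_sum_card_eq[of "\<lambda>p. p < d \<and> blk rs p = I" "\<lambda>p. blk cs (u p)" J]
    unfolding block_count_def by (simp only: conj_assoc finite_Collect_conjI finite_Collect_less_nat simp_thms)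
  hence "int (card {p. p < d \<and> blk rs p = I \<and> blk cs (u p) < J}) = (\<Sum>J'<J. int (block_count u I J'))"
    by simp
  also have "\<dots> = (\<Sum>J'<J. bcount b (Suc I) (Suc J'))"
    by (rule sum.cong) (use zel_cond_block_count[OF sol I] J in auto)
  also have "\<dots> = row_prefix I J" using sum_bcount_row[where b = b and I = I and N = J] b_first_col by (simp add: row_prefix_def)
  finally show ?thesis .
qed

lemma zel_cond_cols_less_interval:
  fixes I J :: nat
  assumes sol: "zel_cond rs cs b u"
  defines "D \<equiv> {p. p < d \<and> blk rs p = I \<and> blk cs (u p) < J}"
  shows "D = {offs rs I..<offs rs I + card D}"
proof (rule downward_closed_eq_interval)
  show "finite D" "\<forall>x\<in>D. offs rs I \<le> x" unfolding D_def using blk_bounds[of _ rs] by auto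
  show "\<forall>x\<in>D. \<forall>x'. offs rs I \<le> x' \<and> x' < x \<longrightarrow> x' \<in> D"
  proof (intro ballI allI impI)
    fix x x' assume x: "x \<in> D" and x': "offs rs I \<le> x' \<and> x' < x"
    have xd: "x < d" "blk rs x = I" "blk cs (u x) < J" using x unfolding D_def by auto
    have "blk rs x' = I" using x' blk_bounds[of x rs] xd by (intro blk_eqI) auto
    moreover have "u x' < u x" using zel_cond_row_mono[OF sol] x' xd calculation by simp
    moreover have "u x < sum_list cs" using zel_cond_less_sum_list[OF sol xd(1)] .
    ultimately show "x' \<in> D" using blk_mono[of "u x'" "u x" cs] xd x' unfolding D_def by auto
  qed
qed

lemma blk_zel_cond:
  assumes sol: "zel_cond rs cs b u" and q: "q < d"
  shows "blk cs (u q) = target_block q"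
proof -
  define I where "I = blk rs q"
  have I: "I < L" unfolding I_def using blk_less_length[OF q] .
  have qo: "offs rs I \<le> q" using blk_bounds[OF q] I_def by simp
  have uq: "u q < sum_list cs" using zel_cond_less_sum_list[OF sol q] .
  have iff: "blk cs (u q) < J \<longleftrightarrow> target_block q < J" if J: "J \<le> L" for J
  proof -
    let ?D = "{p. p < d \<and> blk rs p = I \<and> blk cs (u p) < J}"
    have "blk cs (u q) < J \<longleftrightarrow> q \<in> ?D" using q I_def by simp
    also have "\<dots> \<longleftrightarrow> block_pos q < card ?D"
      using zel_cond_cols_less_interval[OF sol, of I J] qo unfolding block_pos_def I_def
      by (metis (no_types, lifting) atLeastLessThan_iff less_diff_conv2 add.commute)
    also have "\<dots> \<longleftrightarrow> int (block_pos q) < row_prefix I J"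
      by (simp flip: zel_cond_card_cols_less[OF sol I J])
    also have "\<dots> \<longleftrightarrow> target_block q < J"
      using target_block_less_iff[OF q J] I_def by simp
    finally show ?thesis .
  qed
  have "blk cs (u q) < L" "target_block q < L"
    using blk_less_length[OF uq] length_eq target_block_less_L[OF q] by auto
  thus ?thesis using iff[of "Suc (blk cs (u q))"] iff[of "Suc (target_block q)"] by simp
qed

lemma zel_cond_less_iff_lex:
  assumes sol: "zel_cond rs cs b u" and p: "p < d" and p': "p' < d"
  shows "u p' < u p \<longleftrightarrow> lex_before p' p"
proof -
  have mono: "u x < u y \<Longrightarrow> target_block x \<le> target_block y" if "x < d" "y < d" for x y
    using blk_mono[of "u x" "u y" cs] zel_cond_less_sum_list[OF sol] blk_zel_cond[OF sol] that by simp
  have col: "p1 < p2" if "p1 < d" "p2 < d" "target_block p1 = target_block p2" "u p1 < u p2" for p1 p2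
    using zel_cond_col_mono[OF sol that(1,2) _ that(4)] that blk_zel_cond[OF sol] by simp
  have "u p' \<noteq> u p" if "p' \<noteq> p"
    using injD[OF permutes_inj[OF zel_cond_permutes[OF sol]]] that by blast
  thus ?thesis
    using mono[OF p p'] mono[OF p' p] col[OF p p'] col[OF p' p] p p'
    unfolding lex_before_def by (metis less_le not_less_iff_gr_or_eq)
qed

lemma zel_cond_unique:
  assumes sol: "zel_cond rs cs b u"
  shows "u = zel_perm"
proof
  fix p
  note perm = zel_cond_permutes[OF sol]
  show "u p = zel_perm p"
  proof (cases "p < d")
    case True
    have "{p'. p' < d \<and> lex_before p' p} = {p'. p' < d \<and> u p' < u p}"
      using zel_cond_less_iff_lex[OF sol True] by blast
    thus ?thesis using permutes_card_less[OF perm True] True by (simp add: zel_perm_def)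
  qed (use permutes_not_in[OF perm] in \<open>simp add: zel_perm_def\<close>)
qed

lemma the_zel_cond: "(THE u. zel_cond rs cs b u) = zel_perm"
  using zel_cond_zel_perm zel_cond_unique by (rule the_equality)

lemma card_prefix_eq_sum_block_count:
  assumes perm: "u permutes {..<d}"
  shows "card {p. p < offs rs I \<and> u p < offs cs J} = (\<Sum>I'<I. \<Sum>J'<J. block_count u I' J')"
proof -
  have ud: "p < d \<Longrightarrow> u p < sum_list cs" for p using permutes_in_image[OF perm] sum_list_eq by simp
  have "{p. p < offs rs I \<and> u p < offs cs J} = {p. (p < d \<and> blk cs (u p) < J) \<and> blk rs p < I}"
  proof (rule Collect_cong)
    fix p
    show "(p < offs rs I \<and> u p < offs cs J) = ((p < d \<and> blk cs (u p) < J) \<and> blk rs p < I)"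
    proof (cases "p < d")
      case True thus ?thesis using less_offs_iff_blk_less[OF True] less_offs_iff_blk_less[OF ud[OF True]] by auto
    next
      case False thus ?thesis using offs_le_sum_list[of rs I] by auto
    qed
  qed
  hence "card {p. p < offs rs I \<and> u p < offs cs J} =
      (\<Sum>I'<I. card {p. (p < d \<and> blk cs (u p) < J) \<and> blk rs p = I'})"
    using card_less_eq_sum_card_eq[of "\<lambda>p. p < d \<and> blk cs (u p) < J" "blk rs" I] by simp
  also have "\<dots> = (\<Sum>I'<I. \<Sum>J'<J. block_count u I' J')"
  proof (rule sum.cong)
    fix I' assume "I' \<in> {..<I}"
    have "card {p. (p < d \<and> blk cs (u p) < J) \<and> blk rs p = I'} = card {p. (p < d \<and> blk rs p = I') \<and> blk cs (u p) < J}"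
      by (metis (lifting) conj_ac)
    also have "\<dots> = (\<Sum>J'<J. card {p. (p < d \<and> blk rs p = I') \<and> blk cs (u p) = J'})"
      by (rule card_less_eq_sum_card_eq) simp
    finally show "card {p. (p < d \<and> blk cs (u p) < J) \<and> blk rs p = I'} = (\<Sum>J'<J. block_count u I' J')"
      unfolding block_count_def by (simp only: conj_assoc)
  qed simp
  finally show ?thesis .
qed

lemma zel_cond_card_prefix:
  assumes sol: "zel_cond rs cs b u" and I: "I \<le> L" and J: "J \<le> L"
  shows "card {p. p < offs rs I \<and> u p < offs cs J} = b I J"
proof -
  have "int (card {p. p < offs rs I \<and> u p < offs cs J}) = (\<Sum>I'<I. \<Sum>J'<J. int (block_count u I' J'))"
    using card_prefix_eq_sum_block_count[OF zel_cond_permutes[OF sol]] by simp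
  also have "\<dots> = (\<Sum>I'<I. \<Sum>J'<J. bcount b (Suc I') (Suc J'))"
    by (intro sum.cong refl) (use zel_cond_block_count[OF sol] I J in auto)
  also have "\<dots> = int (b I J)"
    using sum_bcount_rectangle[where b = b and M = I and N = J] b_first_row b_first_col by simp
  finally show ?thesis by simp
qed

text \<open>The ones northeast of the one in row \<open>j\<close> are those in earlier block rows and later block
  columns: monotonicity inside blocks rules out the rest.\<close>

lemma zel_cond_card_inversions_at:
  assumes sol: "zel_cond rs cs b u" and j: "j < d"
  shows "int (card {i. i < j \<and> u j < u i}) = int (b (blk rs j) L) - int (b (blk rs j) (Suc (blk cs (u j))))"
proof -
  note ud = zel_cond_less_sum_list[OF sol]
  define I where "I = blk rs j"
  define J where "J = blk cs (u j)"
  have I: "I < L" unfolding I_def using blk_less_length[OF j] .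
  have Jl: "J < L" unfolding J_def using blk_less_length[OF ud[OF j]] length_eq by simp
  have oL: "offs cs L = sum_list cs" using offs_eq_sum_list[of cs L] length_eq by simp
  define A where "A = {i. i < offs rs I \<and> u i < offs cs L}"
  define B where "B = {i. i < offs rs I \<and> u i < offs cs (Suc J)}"
  have "{i. i < j \<and> u j < u i} = A - B"
  proof (rule Set.set_eqI, rule iffI)
    fix i assume "i \<in> {i. i < j \<and> u j < u i}"
    hence ij: "i < j" "u j < u i" by auto
    have id: "i < d" using ij j by simp
    have "blk rs i \<noteq> I" using zel_cond_row_mono[OF sol, of i j] ij j I_def by auto
    hence "i < offs rs I"
      using blk_mono[of i j rs] ij j less_offs_iff_blk_less[OF id] unfolding I_def by simp
    moreover have "blk cs (u i) \<noteq> J" using zel_cond_col_mono[OF sol j id] ij J_def by auto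
    hence "\<not> u i < offs cs (Suc J)"
      using blk_mono[of "u j" "u i" cs] ud[OF id] ij less_offs_iff_blk_less[OF ud[OF id]]
      unfolding J_def by simp
    ultimately show "i \<in> A - B" unfolding A_def B_def using ud[OF id] oL by simp
  next
    fix i assume "i \<in> A - B"
    hence i1: "i < offs rs I" and i2: "\<not> u i < offs cs (Suc J)" unfolding A_def B_def by auto
    have id: "i < d" using i1 offs_le_sum_list[of rs I] by simp
    have "blk rs i < I" using less_offs_iff_blk_less[OF id] i1 by simp
    hence "i < j" unfolding I_def using blk_mono[of j i rs] id by (metis not_le)
    moreover have "u j < offs cs (Suc J)" unfolding J_def using blk_bounds[OF ud[OF j]] by simp
    ultimately show "i \<in> {i. i < j \<and> u j < u i}" using i2 by simp
  qed
  moreover have "B \<subseteq> A" unfolding A_def B_def using offs_mono[of "Suc J" L cs] Jl by auto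
  moreover have "card A = b I L" unfolding A_def by (rule zel_cond_card_prefix[OF sol]) (use I in auto)
  moreover have "card B = b I (Suc J)" unfolding B_def by (rule zel_cond_card_prefix[OF sol]) (use I Jl in auto)
  moreover have "finite A" unfolding A_def by simp
  ultimately show ?thesis
    using card_Diff_subset[of B A] card_mono[of A B] I_def J_def by (simp add: finite_subset of_nat_diff)
qed

lemma zel_cond_perm_length_blocks:
  assumes sol: "zel_cond rs cs b u"
  shows "int (perm_length d u) = (\<Sum>I<L. \<Sum>J<L. bcount b (Suc I) (Suc J) * (int (b I L) - int (b I (Suc J))))"
proof -
  note ud = zel_cond_less_sum_list[OF sol]
  define g where "g = (\<lambda>(I,J). int (b I L) - int (b I (Suc J)))"
  have "{(i, j). i < j \<and> j < d \<and> u j < u i} = (\<lambda>(j,i). (i,j)) ` (SIGMA j:{..<d}. {i. i < j \<and> u j < u i})"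
    by auto
  moreover have "inj_on (\<lambda>(j,i). (i,j)) (SIGMA j:{..<d}. {i. i < j \<and> u j < u i})"
    by (auto simp: inj_on_def)
  ultimately have "perm_length d u = card (SIGMA j:{..<d}. {i. i < j \<and> u j < u i})"
    unfolding perm_length_def by (simp add: card_image)
  also have "\<dots> = (\<Sum>j<d. card {i. i < j \<and> u j < u i})" by (rule card_SigmaI) auto
  finally have "int (perm_length d u) = (\<Sum>j<d. g (blk rs j, blk cs (u j)))"
    using zel_cond_card_inversions_at[OF sol] by (simp add: g_def)
  also have "\<dots> = (\<Sum>y\<in>{..<L} \<times> {..<L}. \<Sum>j\<in>{j\<in>{..<d}. (blk rs j, blk cs (u j)) = y}. g (blk rs j, blk cs (u j)))"
    by (rule sum.group[symmetric]) (use blk_less_length[of _ rs] blk_less_length[OF ud] length_eq in auto)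
  also have "\<dots> = (\<Sum>(I,J)\<in>{..<L} \<times> {..<L}. bcount b (Suc I) (Suc J) * g (I,J))"
  proof (rule sum.cong)
    fix y assume "y \<in> {..<L} \<times> {..<L}"
    then obtain I J where y: "y = (I,J)" "I < L" "J < L" by auto
    have "{j\<in>{..<d}. (blk rs j, blk cs (u j)) = y} = {p. p < d \<and> blk rs p = I \<and> blk cs (u p) = J}"
      using y by auto
    moreover have "(\<Sum>j\<in>{j\<in>{..<d}. (blk rs j, blk cs (u j)) = y}. g (blk rs j, blk cs (u j))) =
        (\<Sum>j\<in>{j\<in>{..<d}. (blk rs j, blk cs (u j)) = y}. g y)"
      by (rule sum.cong) auto
    ultimately show "(\<Sum>j\<in>{j\<in>{..<d}. (blk rs j, blk cs (u j)) = y}. g (blk rs j, blk cs (u j))) =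
        (case y of (I,J) \<Rightarrow> bcount b (Suc I) (Suc J) * g (I,J))"
      using zel_cond_block_count[OF sol y(2,3)] y(1) unfolding block_count_def by simp
  qed simp
  also have "\<dots> = (\<Sum>I<L. \<Sum>J<L. bcount b (Suc I) (Suc J) * g (I,J))"
    by (rule sum.cartesian_product[symmetric])
  finally show ?thesis by (simp add: g_def)
qed

lemma zel_cond_perm_length:
  assumes sol: "zel_cond rs cs b u" and L: "0 < L"
  shows "int (perm_length d u) = (\<Sum>i=2..L. \<Sum>j=1..L-1. (int (b (i-1) L) - int (b (i-1) j)) * bcount b i j)"
proof -
  define F where "F = (\<lambda>i j. (int (b (i-1) L) - int (b (i-1) j)) * bcount b i j)"
  have shift: "\<And>g::nat\<Rightarrow>int. (\<Sum>j=1..L. g j) = (\<Sum>J<L. g (Suc J))"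
    by (subst image_Suc_lessThan[symmetric]) (simp add: sum.reindex)
  have "int (perm_length d u) = (\<Sum>i=1..L. \<Sum>j=1..L. F i j)"
    unfolding zel_cond_perm_length_blocks[OF sol] shift F_def by (simp add: mult.commute)
  also have "\<dots> = (\<Sum>i=2..L. \<Sum>j=1..L. F i j)"
    using sum.atLeast_Suc_atMost[of 1 L "\<lambda>i. \<Sum>j=1..L. F i j"] L by (simp add: F_def b_first_row numeral_2_eq_2)
  also have "\<dots> = (\<Sum>i=2..L. \<Sum>j=1..L-1. F i j)"
  proof (rule sum.cong)
    have "{1..L} = insert L {1..L-1}" by (rule Set.set_eqI) (use L in \<open>simp only: atLeastAtMost_iff insert_iff, linarith\<close>)
    moreover have "L \<notin> {1..L-1}" using L by (simp only: atLeastAtMost_iff) linarith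
    ultimately show "(\<Sum>j=1..L. F i j) = (\<Sum>j=1..L-1. F i j)" for i by (simp add: F_def)
  qed simp
  finally show ?thesis unfolding F_def .
qed

text \<open>If the row of an essential box were not the last of its block row, the next row would carry
  its one further east, and the box below would still lie in the diagram.\<close>

lemma zel_cond_ess_last_row:
  assumes sol: "zel_cond rs cs b u" and e: "(i, j) \<in> ess d u"
  shows "i + 1 = offs rs (Suc (blk rs i))"
proof (rule ccontr)
  have D: "i < d" "j < u i" "\<forall>i'\<le>i. u i' \<noteq> j" and N: "(i+1, j) \<notin> diagram d u"
    using e unfolding ess_def diagram_def by auto
  have j: "j < d" using e unfolding ess_def diagram_def by auto
  assume "i + 1 \<noteq> offs rs (Suc (blk rs i))"
  hence i1: "i + 1 < offs rs (Suc (blk rs i))" using blk_bounds[OF D(1)] by simp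
  hence i1d: "i + 1 < d" using offs_le_sum_list[of rs "Suc (blk rs i)"] by simp
  have "blk rs (i+1) = blk rs i" using i1 blk_bounds[OF D(1)] by (intro blk_eqI) auto
  hence lt: "u i < u (i+1)" using zel_cond_row_mono[OF sol, of i "i+1"] i1d by simp
  obtain i' where "i' \<le> i + 1" "u i' = j" using N i1d j D lt unfolding diagram_def by auto
  hence "u (i+1) = j" using D(3) by (metis le_Suc_eq Suc_eq_plus1)
  thus False using lt D(2) by simp
qed

lemma zel_cond_ess_last_col:
  assumes sol: "zel_cond rs cs b u" and e: "(i, j) \<in> ess d u"
  shows "j + 1 = offs cs (Suc (blk cs j))"
proof (rule ccontr)
  have D: "i < d" "j < d" "j < u i" "\<forall>i'\<le>i. u i' \<noteq> j" and N: "(i, j+1) \<notin> diagram d u"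
    using e unfolding ess_def diagram_def by auto
  have jd: "j < sum_list cs" using D(2) sum_list_eq by simp
  assume "j + 1 \<noteq> offs cs (Suc (blk cs j))"
  hence j1: "j + 1 < offs cs (Suc (blk cs j))" using blk_bounds[OF jd] by simp
  hence j1d: "j + 1 < d" using offs_le_sum_list[of cs "Suc (blk cs j)"] sum_list_eq by simp
  have same: "blk cs (j+1) = blk cs j" using j1 blk_bounds[OF jd] by (intro blk_eqI) auto
  have "\<exists>i'\<le>i. u i' = j + 1"
  proof (cases "j + 1 < u i")
    case True thus ?thesis using N D j1d unfolding diagram_def by auto
  next
    case False thus ?thesis using D(3) by (intro exI[of _ i]) auto
  qed
  then obtain i' where i': "i' \<le> i" "u i' = j + 1" by blast
  obtain p where p: "p < d" "u p = j"
    using permutes_image[OF zel_cond_permutes[OF sol]] D(2) by (metis imageE lessThan_iff)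
  have "i < p" using D(4) p by (metis not_le)
  moreover have "p < i'" using zel_cond_col_mono[OF sol p(1), of i'] p i' same D(1) by simp
  ultimately show False using i' by simp
qed

lemma zel_cond_ess_se_corner:
  assumes sol: "zel_cond rs cs b u" and e: "ij \<in> ess d u"
  shows "se_corner rs cs ij"
proof -
  obtain i j where ij: "ij = (i, j)" by (cases ij)
  have "i < d" "j < sum_list cs" using e sum_list_eq unfolding ij ess_def diagram_def by auto
  thus ?thesis
    using zel_cond_ess_last_row[OF sol e[unfolded ij]] zel_cond_ess_last_col[OF sol e[unfolded ij]]
      blk_less_length blk_bounds in_blockset_iff unfolding se_corner_def ij by auto
qed

definition cross_inversions :: "(nat \<Rightarrow> nat) \<Rightarrow> (nat \<times> nat) set" where
  "cross_inversions u =
     {(i,j). i < j \<and> j < d \<and> u j < u i \<and> blk rs i \<noteq> blk rs j \<and> blk cs (u i) \<noteq> blk cs (u j)}"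

lemma finite_cross_inversions: "finite (cross_inversions u)"
  by (rule finite_subset[of _ "{..<d} \<times> {..<d}"]) (auto simp: cross_inversions_def)

lemma block_preserving_inv:
  assumes bp: "block_preserving sz s"
  shows "block_preserving sz (Hilbert_Choice.inv s)"
  unfolding block_preserving_def
proof (intro conjI allI impI ballI)
  have perm: "s permutes {..<sum_list sz}" using bp unfolding block_preserving_def by simp
  show "Hilbert_Choice.inv s permutes {..<sum_list sz}" by (rule permutes_inv[OF perm])
  fix k p assume "k < length sz" "p \<in> blockset sz k"
  moreover have "Hilbert_Choice.inv s p < sum_list sz"
    using permutes_in_image[OF permutes_inv[OF perm]] blockset_less_sum_list calculation(2) by blast
  moreover have "s (Hilbert_Choice.inv s p) = p" using permutes_inverses(1)[OF perm] .
  ultimately show "Hilbert_Choice.inv s p \<in> blockset sz k"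
    using block_preserving_blk[OF bp, of "Hilbert_Choice.inv s p"] in_blockset_iff blockset_less_sum_list by metis
qed

text \<open>Reordering rows within block rows and columns within block columns does not change which
  pair of block rows and which pair of block columns two ones occupy; so \<open>(i, j) \<mapsto> (s i, s j)\<close> maps
  the cross inversions of \<open>t \<circ> u \<circ> s\<close> injectively to those of \<open>u\<close>.\<close>

lemma card_cross_inversions_le:
  assumes u: "u permutes {..<d}" and s: "block_preserving rs s" and t: "block_preserving cs t"
  shows "card (cross_inversions (t \<circ> u \<circ> s)) \<le> card (cross_inversions u)"
proof -
  have sp: "s permutes {..<d}" using s unfolding block_preserving_def by simp
  have tp: "t permutes {..<d}" using t sum_list_eq unfolding block_preserving_def by simp
  have sd: "p < d \<Longrightarrow> s p < d" and ud: "p < d \<Longrightarrow> u p < d" and td: "p < d \<Longrightarrow> t p < d" for p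
    using permutes_in_image[OF sp] permutes_in_image[OF u] permutes_in_image[OF tp] by auto
  have sb: "p < d \<Longrightarrow> blk rs (s p) = blk rs p" for p using block_preserving_blk[OF s] by simp
  have tb: "p < d \<Longrightarrow> blk cs (t (u (s p))) = blk cs (u (s p))" for p
    using block_preserving_blk[OF t] ud sd sum_list_eq by simp
  have "(\<lambda>(i,j). (s i, s j)) ` cross_inversions (t \<circ> u \<circ> s) \<subseteq> cross_inversions u"
  proof
    fix x assume "x \<in> (\<lambda>(i,j). (s i, s j)) ` cross_inversions (t \<circ> u \<circ> s)"
    then obtain i j where x: "x = (s i, s j)" and m: "(i,j) \<in> cross_inversions (t \<circ> u \<circ> s)" by auto
    have h: "i < j" "j < d" "t (u (s j)) < t (u (s i))" "blk rs i \<noteq> blk rs j"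
        "blk cs (t (u (s i))) \<noteq> blk cs (t (u (s j)))"
      using m unfolding cross_inversions_def by auto
    have id: "i < d" using h by simp
    have r: "blk rs (s i) < blk rs (s j)" using sb id h blk_mono[of i j rs] by (simp add: le_less)
    have "s i < s j"
      using r blk_mono[of "s j" "s i" rs] sd[OF id] by (metis not_le less_le_not_le)
    moreover have c: "blk cs (t (u (s j))) < blk cs (t (u (s i)))"
      using h blk_mono[of "t (u (s j))" "t (u (s i))" cs] td ud sd id sum_list_eq by (simp add: le_less)
    hence "u (s j) < u (s i)"
      using blk_mono[of "u (s i)" "u (s j)" cs] ud sd h tb id sum_list_eq by (metis not_le le_less)
    moreover have "blk cs (u (s i)) \<noteq> blk cs (u (s j))" using c tb[OF id] tb[OF h(2)] by simp
    ultimately show "x \<in> cross_inversions u"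
      unfolding cross_inversions_def x using sd[OF h(2)] r by simp
  qed
  moreover have "inj_on (\<lambda>(i,j). (s i, s j)) (cross_inversions (t \<circ> u \<circ> s))"
    using permutes_inj[OF sp] by (auto simp: inj_on_def dest: injD)
  ultimately show ?thesis using card_inj_on_le[OF _ _ finite_cross_inversions] by blast
qed

lemma block_count_le:
  assumes u: "u permutes {..<d}" and s: "block_preserving rs s" and t: "block_preserving cs t"
  shows "block_count (t \<circ> u \<circ> s) I J \<le> block_count u I J"
proof -
  have sp: "s permutes {..<d}" using s unfolding block_preserving_def by simp
  have sd: "p < d \<Longrightarrow> s p < d" and ud: "p < d \<Longrightarrow> u p < d" for p
    using permutes_in_image[OF sp] permutes_in_image[OF u] by auto
  have "s ` {p. p < d \<and> blk rs p = I \<and> blk cs (t (u (s p))) = J} \<subseteq> {p. p < d \<and> blk rs p = I \<and> blk cs (u p) = J}"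
    using sd block_preserving_blk[OF s] block_preserving_blk[OF t] ud sum_list_eq by auto
  moreover have "inj_on s {p. p < d \<and> blk rs p = I \<and> blk cs (t (u (s p))) = J}"
    using inj_on_subset[OF permutes_inj[OF sp] subset_UNIV] .
  ultimately show ?thesis unfolding block_count_def by (intro card_inj_on_le) auto
qed

lemma zel_cond_cross_inversions:
  assumes sol: "zel_cond rs cs b u"
  shows "cross_inversions u = {(i,j). i < j \<and> j < d \<and> u j < u i}"
proof -
  have "blk rs i \<noteq> blk rs j \<and> blk cs (u i) \<noteq> blk cs (u j)" if "i < j" "j < d" "u j < u i" for i j
    using zel_cond_row_mono[OF sol that(1,2)] zel_cond_col_mono[OF sol that(2) _ _ that(3)] that by fastforce
  thus ?thesis unfolding cross_inversions_def by blast
qed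

lemma zel_condI_cross_inversions:
  assumes perm: "w permutes {..<d}"
    and counts: "\<And>I J. I < L \<Longrightarrow> J < L \<Longrightarrow> int (block_count w I J) = bcount b (Suc I) (Suc J)"
    and cross: "{(i,j). i < j \<and> j < d \<and> w j < w i} \<subseteq> cross_inversions w"
  shows "zel_cond rs cs b w"
  unfolding zel_cond_iff
proof (intro conjI allI impI perm counts)
  have ne: "w p \<noteq> w p'" if "p \<noteq> p'" for p p' using injD[OF permutes_inj[OF perm]] that by blast
  fix p p'
  show "w p < w p'" if h: "p < p' \<and> p' < d \<and> blk rs p = blk rs p'"
  proof (rule ccontr)
    assume "\<not> w p < w p'"
    hence "(p, p') \<in> cross_inversions w" using cross h ne[of p p'] by auto
    thus False using h unfolding cross_inversions_def by simp
  qed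
  show "p < p'" if h: "p < d \<and> p' < d \<and> blk cs (w p) = blk cs (w p') \<and> w p < w p'"
  proof (rule ccontr)
    assume "\<not> p < p'"
    hence "(p', p) \<in> cross_inversions w" using cross h by (auto simp: not_less le_less)
    thus False using h unfolding cross_inversions_def by simp
  qed
qed

text \<open>The counts \<open>block_count\<close> and the number of cross inversions are constant on a double coset;
  every other inversion of a permutation in the coset is one inside a block row or block
  column, and only the Zelevinsky permutation has none of those.\<close>

lemma zel_cond_dcoset_min:
  assumes sol: "zel_cond rs cs b u" and w: "w \<in> dcoset rs cs u" and ne: "w \<noteq> u"
  shows "perm_length d u < perm_length d w"
proof -
  obtain s t where wst: "w = t \<circ> u \<circ> s" and s: "block_preserving rs s" and t: "block_preserving cs t"
    using w unfolding dcoset_def by blast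
  have pu: "u permutes {..<d}" by (rule zel_cond_permutes[OF sol])
  have ps: "s permutes {..<d}" and pt: "t permutes {..<d}"
    using s t sum_list_eq unfolding block_preserving_def by simp_all
  have pw: "w permutes {..<d}" unfolding wst by (intro permutes_compose ps pt pu)
  have uw: "u = Hilbert_Choice.inv t \<circ> w \<circ> Hilbert_Choice.inv s"
    unfolding wst using permutes_inverses[OF ps] permutes_inverses[OF pt] by (simp add: fun_eq_iff)
  note s' = block_preserving_inv[OF s] and t' = block_preserving_inv[OF t]
  have counts: "block_count w I J = block_count u I J" for I J
    using block_count_le[OF pu s t, folded wst, of I J] block_count_le[OF pw s' t', folded uw, of I J]
    by simp
  have cross: "card (cross_inversions w) = card (cross_inversions u)"
    using card_cross_inversions_le[OF pu s t, folded wst] card_cross_inversions_le[OF pw s' t', folded uw]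
    by simp
  let ?inv = "\<lambda>v. {(i,j). i < j \<and> j < d \<and> v j < v i}"
  have "\<not> ?inv w \<subseteq> cross_inversions w"
  proof
    assume "?inv w \<subseteq> cross_inversions w"
    hence "zel_cond rs cs b w"
      using zel_condI_cross_inversions[OF pw] counts zel_cond_block_count[OF sol] by simp
    thus False using zel_cond_unique[OF sol] zel_cond_unique[of w] ne by simp
  qed
  moreover have "cross_inversions w \<subseteq> ?inv w" unfolding cross_inversions_def by auto
  ultimately have "cross_inversions w \<subset> ?inv w" by blast
  moreover have "finite (?inv w)" by (rule finite_subset[of _ "{..<d} \<times> {..<d}"]) auto
  ultimately have "card (cross_inversions w) < card (?inv w)" by (rule psubset_card_mono[rotated])
  thus ?thesis using cross zel_cond_cross_inversions[OF sol] unfolding perm_length_def by simp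
qed

end

section \<open>The matrix \<open>\<zeta>(V)\<close>\<close>

lemma sum_list_map_dy: "sum_list (map dy [0..<n+1]) = dY n dy"
proof -
  have "sum_list (map dy [0..<n+1]) = sum dy {0..<n+1}" using sum_set_upt_conv_sum_list_nat[of dy 0 "n+1"] by simp
  also have "{0..<n+1} = {..n}" by auto
  finally show ?thesis unfolding dY_def .
qed

lemma sum_list_map_dx: "sum_list (map dx (rev [1..<n+1])) = dX n dx"
proof -
  have "sum_list (map dx (rev [1..<n+1])) = sum_list (map dx [1..<n+1])"
    by (simp add: rev_map[symmetric] sum_list_rev)
  also have "\<dots> = sum dx {1..<n+1}" using sum_set_upt_conv_sum_list_nat[of dx 1 "n+1", unfolded set_upt] by (rule sym)
  also have "{1..<n+1} = {1..n}" by auto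
  finally show ?thesis unfolding dX_def .
qed

lemma length_rowsz: "length (rowsz n dy dx) = 2*n+1" by (simp add: rowsz_def)
lemma length_colsz: "length (colsz n dy dx) = 2*n+1" by (simp add: colsz_def)

lemma sum_list_rowsz: "sum_list (rowsz n dy dx) = dY n dy + dX n dx"
  unfolding rowsz_def using sum_list_map_dy[of dy n] sum_list_map_dx[of dx n] by simp

lemma sum_list_colsz: "sum_list (colsz n dy dx) = dX n dx + dY n dy"
  unfolding colsz_def using sum_list_map_dy[of dy n] sum_list_map_dx[of dx n] by simp

lemma zeta_identity_frame: "identity_frame (zeta n dy dx Va Vb) (dY n dy) (dX n dx)"
proof -
  have "dim_row (MQ n dy dx Va Vb) = dY n dy" "dim_col (MQ n dy dx Va Vb) = dX n dx"
    unfolding MQ_def blkmat_def Let_def using sum_list_map_dy[of dy n] sum_list_map_dx[of dx n] by simp_all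
  thus ?thesis unfolding identity_frame_def zeta_def by auto
qed

definition zeta_of :: "'a::field itself \<Rightarrow> nat \<Rightarrow> (nat \<Rightarrow> nat) \<Rightarrow> (nat \<Rightarrow> nat)
    \<Rightarrow> (nat \<Rightarrow> nat \<Rightarrow> nat) \<Rightarrow> 'a mat" where
  "zeta_of K n dy dx r =
     (let V = (SOME V. V \<in> (orbit n dy dx r :: ((nat \<Rightarrow> 'a mat) \<times> (nat \<Rightarrow> 'a mat)) set))
      in zeta n dy dx (fst V) (snd V))"

lemma bmat_eq_leading_rank:
  fixes K :: "'a::field itself"
  assumes "I \<le> 2*n+1" and "J \<le> 2*n+1"
  shows "bmat K n dy dx r I J = leading_rank (zeta_of K n dy dx r) (offs (rowsz n dy dx) I) (offs (colsz n dy dx) J)"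
proof (cases "I = 0 \<or> J = 0")
  case True
  hence "bmat K n dy dx r I J = 0" unfolding bmat_def by auto
  moreover have "leading_rank (zeta_of K n dy dx r) (offs (rowsz n dy dx) I) (offs (colsz n dy dx) J) = 0"
    using True leading_rank_le_rows[of "zeta_of K n dy dx r" 0] leading_rank_le_cols[of "zeta_of K n dy dx r" _ 0]
    by auto
  ultimately show ?thesis by simp
next
  case False
  thus ?thesis
    using assms unfolding bmat_def zeta_of_def topleft_def leading_rank_def leading_submat_def Let_def by simp
qed

lemma block_rank_array_bmat:
  "block_rank_array (rowsz n dy dx) (colsz n dy dx) (bmat (K::'a::field itself) n dy dx r)"
proof -
  let ?rs = "rowsz n dy dx" and ?cs = "colsz n dy dx" and ?Z = "zeta_of K n dy dx r"
  interpret identity_frame ?Z "dY n dy" "dX n dx" unfolding zeta_of_def Let_def by (rule zeta_identity_frame)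
  note b = bmat_eq_leading_rank[of _ n _ K dy dx r]
  have L: "length ?rs = 2*n+1" "length ?cs = 2*n+1" by (rule length_rowsz length_colsz)+
  have end_rs: "offs ?rs (2*n+1) = dY n dy + dX n dx"
    using offs_eq_sum_list[of ?rs] L sum_list_rowsz by simp
  have end_cs: "offs ?cs (2*n+1) = dX n dx + dY n dy"
    using offs_eq_sum_list[of ?cs] L sum_list_colsz by simp
  show ?thesis
  proof
    show "length ?cs = length ?rs" and "sum_list ?cs = sum_list ?rs"
      using L sum_list_rowsz sum_list_colsz by simp_all
  next
    fix I assume "I \<le> length ?rs"
    thus "bmat K n dy dx r I (length ?rs) = offs ?rs I"
      using b[of I "2*n+1"] L end_cs leading_rank_full_rows offs_le_sum_list[of ?rs I] sum_list_rowsz by simp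
  next
    fix J assume "J \<le> length ?rs"
    thus "bmat K n dy dx r (length ?rs) J = offs ?cs J"
      using b[of "2*n+1" J] L end_rs leading_rank_full_cols offs_le_sum_list[of ?cs J] sum_list_colsz by simp
  next
    fix J show "bmat K n dy dx r 0 J = 0" unfolding bmat_def by simp
  next
    fix I show "bmat K n dy dx r I 0 = 0" unfolding bmat_def by simp
  next
    fix I J assume "I < length ?rs" "J < length ?rs"
    thus "0 \<le> bcount (bmat K n dy dx r) (Suc I) (Suc J)"
      using leading_rank_submodular[of "offs ?rs I" "offs ?rs (Suc I)" "offs ?cs J" "offs ?cs (Suc J)" ?Z]
        b[of I J] b[of "Suc I" J] b[of I "Suc J"] b[of "Suc I" "Suc J"] L
      by (simp add: offs_mono bcount_def)
  qed
qed

theorem lemma4p10: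
  fixes n :: nat and dy dx :: "nat \<Rightarrow> nat" and r :: "nat \<Rightarrow> nat \<Rightarrow> nat"
  assumes "qrank_array TYPE('k::field) n dy dx r"
  defines "v \<equiv> zel TYPE('k) n dy dx r"
    and "b \<equiv> bmat TYPE('k) n dy dx r"
    and "rs \<equiv> rowsz n dy dx" and "cs \<equiv> colsz n dy dx"
    and "d \<equiv> sum_list (rowsz n dy dx)"
  shows "(v \<in> dcoset rs cs v \<and> (\<forall>w\<in>dcoset rs cs v. w \<noteq> v \<longrightarrow> perm_length d v < perm_length d w))
    \<and> (\<forall>ij\<in>ess d v. se_corner rs cs ij)
    \<and> (int (perm_length d v) =
           (\<Sum>i=2..2*n+1. \<Sum>j=1..2*n. (int (b (i-1) (2*n+1)) - int (b (i-1) j)) * bcount b i j))"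
proof -
  interpret Z: block_rank_array rs cs b unfolding rs_def cs_def b_def by (rule block_rank_array_bmat)
  have "v = Z.zel_perm" unfolding v_def zel_def using Z.the_zel_cond unfolding rs_def cs_def b_def .
  hence sol: "zel_cond rs cs b v" using Z.zel_cond_zel_perm by simp
  have d: "d = sum_list rs" and L: "length rs = 2*n+1" unfolding d_def rs_def by (simp_all add: length_rowsz)
  show ?thesis
    using dcoset_self Z.zel_cond_dcoset_min[OF sol] Z.zel_cond_ess_se_corner[OF sol]
      Z.zel_cond_perm_length[OF sol] unfolding d L by simp
qed

end
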